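(* The Hopf monoid of simplicial complexes $\mathbf{k}\mathbf{SC}$ is free commutative, free cocommutative, and self-dual.
   Context: $\mathbf{k}$ is a field of characteristic $0$. A simplicial complex on a finite ground set $I$ is a collection $\Gamma\subseteq2^I$ that is downward closed ($Y\subseteq X\in\Gamma\Rightarrow Y\in\Gamma$). $\mathbf{SC}[I]$ is the set of simplicial complexes on $I$ and $\mathbf{k}\mathbf{SC}[I]$ the vector space with basis $\mathbf{SC}[I]$; bijections act by relabelling. Multiplication: for $\Gamma_1$ on $S$, $\Gamma_2$ on $T$ disjoint, $m_{S,T}(\Gamma_1,\Gamma_2)=\Gamma_1\sqcup\Gamma_2=\{A\subseteq S\sqcup T: A\in\Gamma_1\text{ or }A\in\Gamma_2\}$. Comultiplication: $\Delta_{S,T}(\Gamma)=\Gamma|S\otimes\Gamma|T$ where $\Gamma|S=\Gamma\cap2^S$. For a set species $\mathbf{q}$ with $\mathbf{q}[\emptyset]=\emptyset$, $\mathcal{S}(\mathbf{q})[I]$ has basis the pairs $(A,\{x_i\})$ with $A$ an unordered set partition of $I$ into nonempty blocks $A_i$ and $x_i\in\mathbf{q}[A_i]$; the free commutative monoid structure is union of such data; the free cocommutative comonoid structure sends $(A,\{x_i\})$ to $(A|_S,\{x_i\}_{A_i\subseteq S})\otimes(A|_T,\{x_i\}_{A_i\subseteq T})$ if $S$ is a union of blocks of $A$, and to $0$ otherwise. A vector space monoid (resp. comonoid) is free commutative (resp. free cocommutative) if it is isomorphic as a monoid (resp. comonoid) to some $\mathcal{S}(\mathbf{q})$. A vector space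 Hopf monoid is self-dual if there is a species isomorphism to its linear dual (with dual product $\Delta^*$ and coproduct $m^*$) that is simultaneously a monoid and a comonoid isomorphism. *)

theory Defs
  imports Main "HOL-Library.Disjoint_Sets"
begin

definition supp :: "('b \<Rightarrow> 'k::zero) \<Rightarrow> 'b set" where
  "supp f = {x. f x \<noteq> 0}"

text \<open>The vector space with basis B: finitely supported functions B -> k.\<close>
definition fspace :: "'b set \<Rightarrow> ('b \<Rightarrow> 'k::zero) set" where
  "fspace B = {f. finite (supp f) \<and> supp f \<subseteq> B}"

definition delta :: "'b \<Rightarrow> 'b \<Rightarrow> 'k::{zero,one}" where
  "delta x = (\<lambda>y. if y = x then 1 else 0)"

text \<open>Linear extension of a partial map on basis elements given by a functional relation R.\<close>
definition linrel :: "('b \<Rightarrow> 'c \<Rightarrow> bool) \<Rightarrow> ('b \<Rightarrow> 'k::comm_monoid_add) \<Rightarrow> 'c \<Rightarrow> 'k" where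
  "linrel R f = (\<lambda>y. \<Sum>x\<in>supp f. if R x y then f x else 0)"

text \<open>Tensor product of linear maps; tensors of V (basis B) and W (basis C) are
  finitely supported functions on B \<times> C.\<close>
definition tensor_map :: "(('b \<Rightarrow> 'k) \<Rightarrow> ('c \<Rightarrow> 'k)) \<Rightarrow> (('d \<Rightarrow> 'k) \<Rightarrow> ('e \<Rightarrow> 'k))
    \<Rightarrow> ('b \<times> 'd \<Rightarrow> 'k::comm_ring_1) \<Rightarrow> 'c \<times> 'e \<Rightarrow> 'k" where
  "tensor_map \<phi> \<psi> F = (\<lambda>(u, v). \<Sum>p\<in>supp F. F p * \<phi> (delta (fst p)) u * \<psi> (delta (snd p)) v)"

definition linear_on :: "('b \<Rightarrow> 'k) set \<Rightarrow> ('c \<Rightarrow> 'k) set \<Rightarrow> (('b \<Rightarrow> 'k) \<Rightarrow> ('c \<Rightarrow> 'k::comm_ring_1)) \<Rightarrow> bool" where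
  "linear_on V W \<phi> \<longleftrightarrow> (\<forall>f\<in>V. \<phi> f \<in> W)
     \<and> (\<forall>f\<in>V. \<forall>g\<in>V. \<phi> (\<lambda>x. f x + g x) = (\<lambda>y. \<phi> f y + \<phi> g y))
     \<and> (\<forall>c. \<forall>f\<in>V. \<phi> (\<lambda>x. c * f x) = (\<lambda>y. c * \<phi> f y))"

definition lin_iso :: "('b \<Rightarrow> 'k) set \<Rightarrow> ('c \<Rightarrow> 'k) set \<Rightarrow> (('b \<Rightarrow> 'k) \<Rightarrow> ('c \<Rightarrow> 'k::comm_ring_1)) \<Rightarrow> bool" where
  "lin_iso V W \<phi> \<longleftrightarrow> linear_on V W \<phi> \<and> bij_betw \<phi> V W"

text \<open>Species on finite subsets of the type 'a; the component at I is the vector space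
  fspace (basis H I); a bijection \<sigma> : I \<rightarrow> J acts on basis elements by act H \<sigma> I.
  mult H S T : H[S] \<otimes> H[T] \<rightarrow> H[S \<union> T], comult H S T : H[S \<union> T] \<rightarrow> H[S] \<otimes> H[T],
  munit H \<in> H[{}] is the unit, ccounit H : H[{}] \<rightarrow> k the counit.\<close>
record ('a, 'b, 'k) lspecies =
  basis :: "'a set \<Rightarrow> 'b set"
  act :: "('a \<Rightarrow> 'a) \<Rightarrow> 'a set \<Rightarrow> 'b \<Rightarrow> 'b"
  mult :: "'a set \<Rightarrow> 'a set \<Rightarrow> ('b \<times> 'b \<Rightarrow> 'k) \<Rightarrow> 'b \<Rightarrow> 'k"
  munit :: "'b \<Rightarrow> 'k"
  comult :: "'a set \<Rightarrow> 'a set \<Rightarrow> ('b \<Rightarrow> 'k) \<Rightarrow> 'b \<times> 'b \<Rightarrow> 'k"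
  ccounit :: "('b \<Rightarrow> 'k) \<Rightarrow> 'k"

definition relab :: "('a, 'b, 'k::comm_monoid_add) lspecies \<Rightarrow> ('a \<Rightarrow> 'a) \<Rightarrow> 'a set \<Rightarrow> ('b \<Rightarrow> 'k) \<Rightarrow> 'b \<Rightarrow> 'k" where
  "relab H \<sigma> I f = linrel (\<lambda>x y. y = act H \<sigma> I x) f"

definition species_iso :: "('a, 'b, 'k::comm_ring_1) lspecies \<Rightarrow> ('a, 'c, 'k) lspecies
    \<Rightarrow> ('a set \<Rightarrow> ('b \<Rightarrow> 'k) \<Rightarrow> ('c \<Rightarrow> 'k)) \<Rightarrow> bool" where
  "species_iso H K \<phi> \<longleftrightarrow>
     (\<forall>I. finite I \<longrightarrow> lin_iso (fspace (basis H I)) (fspace (basis K I)) (\<phi> I))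
   \<and> (\<forall>I J \<sigma> f. finite I \<longrightarrow> bij_betw \<sigma> I J \<longrightarrow> f \<in> fspace (basis H I) \<longrightarrow>
        \<phi> J (relab H \<sigma> I f) = relab K \<sigma> I (\<phi> I f))"

definition monoid_morph :: "('a, 'b, 'k::comm_ring_1) lspecies \<Rightarrow> ('a, 'c, 'k) lspecies
    \<Rightarrow> ('a set \<Rightarrow> ('b \<Rightarrow> 'k) \<Rightarrow> ('c \<Rightarrow> 'k)) \<Rightarrow> bool" where
  "monoid_morph H K \<phi> \<longleftrightarrow>
     (\<forall>S T F. finite S \<longrightarrow> finite T \<longrightarrow> S \<inter> T = {} \<longrightarrow> F \<in> fspace (basis H S \<times> basis H T) \<longrightarrow>
        \<phi> (S \<union> T) (mult H S T F) = mult K S T (tensor_map (\<phi> S) (\<phi> T) F))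
   \<and> \<phi> {} (munit H) = munit K"

definition comonoid_morph :: "('a, 'b, 'k::comm_ring_1) lspecies \<Rightarrow> ('a, 'c, 'k) lspecies
    \<Rightarrow> ('a set \<Rightarrow> ('b \<Rightarrow> 'k) \<Rightarrow> ('c \<Rightarrow> 'k)) \<Rightarrow> bool" where
  "comonoid_morph H K \<phi> \<longleftrightarrow>
     (\<forall>S T f. finite S \<longrightarrow> finite T \<longrightarrow> S \<inter> T = {} \<longrightarrow> f \<in> fspace (basis H (S \<union> T)) \<longrightarrow>
        comult K S T (\<phi> (S \<union> T) f) = tensor_map (\<phi> S) (\<phi> T) (comult H S T f))
   \<and> (\<forall>f\<in>fspace (basis H {}). ccounit K (\<phi> {} f) = ccounit H f)"

text \<open>Linear dual of a species with finite bases, written in the dual basis: a functional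
  h is represented by its values on the basis.  Product is \<Delta>*, coproduct is m*,
  unit is the counit \<epsilon>, counit is evaluation at the unit.  The dual action
  h \<mapsto> h o inverse(sigma) sends dual basis vectors to dual basis vectors along the same action.\<close>
definition lin_dual :: "('a, 'b, 'k::comm_ring_1) lspecies \<Rightarrow> ('a, 'b, 'k) lspecies" where
  "lin_dual H = \<lparr> basis = basis H, act = act H,
     mult = (\<lambda>S T F x. if x \<in> basis H (S \<union> T)
                 then (\<Sum>p\<in>basis H S \<times> basis H T. F p * comult H S T (delta x) p) else 0),
     munit = (\<lambda>x. if x \<in> basis H {} then ccounit H (delta x) else 0),
     comult = (\<lambda>S T h p. if p \<in> basis H S \<times> basis H T
                 then (\<Sum>y\<in>basis H (S \<union> T). h y * mult H S T (delta p) y) else 0),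
     ccounit = (\<lambda>h. \<Sum>y\<in>basis H {}. h y * munit H y) \<rparr>"

definition SC :: "'a set \<Rightarrow> 'a set set set" where
  "SC I = {\<Gamma>. \<Gamma> \<subseteq> Pow I \<and> {} \<in> \<Gamma> \<and> (\<forall>X\<in>\<Gamma>. \<forall>Y. Y \<subseteq> X \<longrightarrow> Y \<in> \<Gamma>)}"

definition kSC :: "('a, 'a set set, 'k::comm_ring_1) lspecies" where
  "kSC = \<lparr> basis = SC, act = (\<lambda>\<sigma> I \<Gamma>. (\<lambda>X. \<sigma> ` X) ` \<Gamma>),
     mult = (\<lambda>S T. linrel (\<lambda>p \<Gamma>. \<Gamma> = fst p \<union> snd p)),
     munit = delta {{}},
     comult = (\<lambda>S T. linrel (\<lambda>\<Gamma> p. p = (\<Gamma> \<inter> Pow S, \<Gamma> \<inter> Pow T))),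
     ccounit = (\<lambda>f. f {{}}) \<rparr>"

text \<open>A set species q with elements encoded as natural numbers (no loss, since
  a species relevant here has finite, hence countable, components);
  qact \<sigma> A transports q[A] to q[\<sigma> ` A].\<close>
definition set_species :: "('a set \<Rightarrow> nat set) \<Rightarrow> (('a \<Rightarrow> 'a) \<Rightarrow> 'a set \<Rightarrow> nat \<Rightarrow> nat) \<Rightarrow> bool" where
  "set_species q qact \<longleftrightarrow>
     (\<forall>A B \<sigma> x. finite A \<longrightarrow> bij_betw \<sigma> A B \<longrightarrow> x \<in> q A \<longrightarrow> qact \<sigma> A x \<in> q B)
   \<and> (\<forall>A \<sigma> x. finite A \<longrightarrow> (\<forall>a\<in>A. \<sigma> a = a) \<longrightarrow> x \<in> q A \<longrightarrow> qact \<sigma> A x = x)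
   \<and> (\<forall>A \<sigma> \<tau> x. finite A \<longrightarrow> (\<forall>a\<in>A. \<sigma> a = \<tau> a) \<longrightarrow> x \<in> q A \<longrightarrow> qact \<sigma> A x = qact \<tau> A x)
   \<and> (\<forall>A B \<sigma> \<tau> x. finite A \<longrightarrow> bij_betw \<sigma> A B \<longrightarrow> x \<in> q A \<longrightarrow>
        qact (\<tau> \<circ> \<sigma>) A x = qact \<tau> B (qact \<sigma> A x))"

text \<open>Basis of S(q)[I]: sets of pairs (block, structure) whose blocks form a set
  partition of I into nonempty blocks, each block occurring once.\<close>
definition Sq_basis :: "('a set \<Rightarrow> nat set) \<Rightarrow> 'a set \<Rightarrow> ('a set \<times> nat) set set" where
  "Sq_basis q I = {X. partition_on I (fst ` X) \<and> inj_on fst X \<and> (\<forall>p\<in>X. snd p \<in> q (fst p))}"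

definition Sq :: "('a set \<Rightarrow> nat set) \<Rightarrow> (('a \<Rightarrow> 'a) \<Rightarrow> 'a set \<Rightarrow> nat \<Rightarrow> nat)
    \<Rightarrow> ('a, ('a set \<times> nat) set, 'k::comm_ring_1) lspecies" where
  "Sq q qact = \<lparr> basis = Sq_basis q,
     act = (\<lambda>\<sigma> I X. (\<lambda>p. (\<sigma> ` fst p, qact \<sigma> (fst p) (snd p))) ` X),
     mult = (\<lambda>S T. linrel (\<lambda>p X. X = fst p \<union> snd p)),
     munit = delta {},
     comult = (\<lambda>S T. linrel (\<lambda>X p. (\<forall>A\<in>fst ` X. A \<subseteq> S \<or> A \<subseteq> T)
                 \<and> p = ({r\<in>X. fst r \<subseteq> S}, {r\<in>X. fst r \<subseteq> T}))),
     ccounit = (\<lambda>f. f {}) \<rparr>"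

end

theory Submission
  imports Defs
begin

text \<open>
  A complex is the union of the connected complexes it induces on its connected components, and a
  complex glued from connected complexes on the blocks of a set partition has exactly these blocks
  as components.  So the decomposition into components is a bijection from SC[I] onto the basis of
  S(q)[I], q the species of connected complexes, and it carries the union of complexes on disjoint
  ground sets to the product of S(q): kSC is free commutative.

  Pair \<Gamma> with \<Delta> by the number of subcomplexes of \<Gamma> \<inter> \<Delta>.  This count is invariant under
  relabelling and, on disjoint ground sets, multiplicative in either argument, so the pairing is a
  morphism of Hopf monoids kSC \<rightarrow> kSC*.  Its matrix is the product of the zeta matrix of the
  inclusion order on complexes with its transpose; both factors are unitriangular, so it is
  invertible over any commutative ring: kSC is self-dual.

  In kSC* the coproduct of \<Delta> is the pair of its restrictions to S and T if \<Delta> is their union,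
  and 0 otherwise; the component decomposition turns this into the coproduct of S(q).  Composing
  with the self-duality, kSC is free cocommutative.
\<close>

section \<open>Linear maps given by matrices\<close>

text \<open>linext a is the linear map sending the basis vector delta x to the column a x.  All maps
  below are of this form, so identities between composites reduce to identities between columns.\<close>
definition linext :: "('b \<Rightarrow> 'c \<Rightarrow> 'k::comm_ring_1) \<Rightarrow> ('b \<Rightarrow> 'k) \<Rightarrow> 'c \<Rightarrow> 'k" where
  "linext a f = (\<lambda>y. \<Sum>x\<in>supp f. f x * a x y)"

lemma fspace_iff: "f \<in> fspace B \<longleftrightarrow> finite (supp f) \<and> supp f \<subseteq> B"
  by (simp add: fspace_def)

lemma fspaceI: "finite B \<Longrightarrow> supp f \<subseteq> B \<Longrightarrow> f \<in> fspace B"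
  by (auto simp: fspace_def intro: finite_subset)

lemma fspace_supp_subset: "g \<in> fspace B \<Longrightarrow> supp f \<subseteq> supp g \<Longrightarrow> f \<in> fspace B"
  by (auto simp: fspace_iff intro: finite_subset)

lemma fspace_add:
  fixes f g :: "'b \<Rightarrow> 'k::monoid_add"
  assumes "f \<in> fspace B" "g \<in> fspace B"
  shows "(\<lambda>x. f x + g x) \<in> fspace B"
proof -
  have "supp (\<lambda>x. f x + g x) \<subseteq> supp f \<union> supp g" by (auto simp: supp_def)
  then show ?thesis using assms by (auto simp: fspace_iff intro: finite_subset)
qed

lemma fspace_diff:
  fixes f g :: "'b \<Rightarrow> 'k::group_add"
  assumes "f \<in> fspace B" "g \<in> fspace B"
  shows "(\<lambda>x. f x - g x) \<in> fspace B"
proof -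
  have "supp (\<lambda>x. f x - g x) \<subseteq> supp f \<union> supp g" by (auto simp: supp_def)
  then show ?thesis using assms by (auto simp: fspace_iff intro: finite_subset)
qed

lemma supp_zero [simp]: "supp (\<lambda>x. 0) = {}"
  by (simp add: supp_def)

lemma supp_delta [simp]: "supp (delta x :: 'b \<Rightarrow> 'k::zero_neq_one) = {x}"
  by (auto simp: supp_def delta_def)

lemma delta_in_fspace: "x \<in> B \<Longrightarrow> (delta x :: 'b \<Rightarrow> 'k::zero_neq_one) \<in> fspace B"
  by (simp add: fspace_def)

lemma sum_mult_delta:
  assumes "finite A"
  shows "(\<Sum>p\<in>A. F p * delta q p) = (if q \<in> A then F q else (0::'k::comm_ring_1))"
  using assms by (simp add: delta_def if_distrib[of "(*) _"] sum.delta cong: if_cong)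

lemma linext_eq_sum:
  assumes "finite A" "supp f \<subseteq> A"
  shows "linext a f y = (\<Sum>x\<in>A. f x * a x y)"
  unfolding linext_def
  by (rule sum.mono_neutral_left) (use assms in \<open>auto simp: supp_def\<close>)

lemma linext_cong: "(\<And>x. x \<in> supp f \<Longrightarrow> a x = b x) \<Longrightarrow> linext a f = linext b f"
  unfolding linext_def by auto

lemma linext_delta [simp]: "linext a (delta x :: 'b \<Rightarrow> 'k::comm_ring_1) = a x"
  unfolding linext_def supp_delta by (rule ext) (simp add: delta_def)

lemma linext_zero [simp]: "linext a (\<lambda>x. 0) = (\<lambda>y. 0)"
  by (simp add: linext_def)

lemma supp_linext: "supp (linext a f) \<subseteq> (\<Union>x\<in>supp f. supp (a x))"
proof
  fix y assume "y \<in> supp (linext a f)"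
  then have "(\<Sum>x\<in>supp f. f x * a x y) \<noteq> 0" by (simp add: supp_def linext_def)
  then obtain x where "x \<in> supp f" "f x * a x y \<noteq> 0" by (meson sum.neutral)
  then show "y \<in> (\<Union>x\<in>supp f. supp (a x))" by (auto simp: supp_def)
qed

lemma linext_in_fspace:
  assumes "finite (supp f)" "\<And>x. x \<in> supp f \<Longrightarrow> a x \<in> fspace C"
  shows "linext a f \<in> fspace C"
proof -
  have "finite (\<Union>x\<in>supp f. supp (a x))" "(\<Union>x\<in>supp f. supp (a x)) \<subseteq> C"
    using assms by (auto simp: fspace_iff)
  then show ?thesis using supp_linext[of a f] by (auto simp: fspace_iff intro: finite_subset)
qed

lemma linext_linext:
  assumes f: "finite (supp f)" and a: "\<And>x. x \<in> supp f \<Longrightarrow> finite (supp (a x))"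
  shows "linext b (linext a f) = linext (\<lambda>x. linext b (a x)) f"
proof
  fix z
  define Y where "Y = (\<Union>x\<in>supp f. supp (a x))"
  have Y: "finite Y" using f a by (simp add: Y_def)
  have "linext b (linext a f) z = (\<Sum>y\<in>Y. linext a f y * b y z)"
    using Y supp_linext[of a f] by (intro linext_eq_sum) (auto simp: Y_def)
  also have "\<dots> = (\<Sum>y\<in>Y. \<Sum>x\<in>supp f. f x * (a x y * b y z))"
    by (simp add: linext_def sum_distrib_right mult.assoc)
  also have "\<dots> = (\<Sum>x\<in>supp f. f x * (\<Sum>y\<in>Y. a x y * b y z))"
    by (subst sum.swap) (simp add: sum_distrib_left)
  also have "\<dots> = linext (\<lambda>x. linext b (a x)) f z"
    unfolding linext_def[of "\<lambda>x. linext b (a x)"]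
  proof (rule sum.cong[OF refl])
    fix x assume "x \<in> supp f"
    then have "supp (a x) \<subseteq> Y" by (auto simp: Y_def)
    then show "f x * (\<Sum>y\<in>Y. a x y * b y z) = f x * linext b (a x) z"
      by (simp add: linext_eq_sum[OF Y])
  qed
  finally show "linext b (linext a f) z = linext (\<lambda>x. linext b (a x)) f z" .
qed

lemma linext_linext_delta:
  "finite (supp f) \<Longrightarrow> linext b (linext (\<lambda>x. delta (g x)) f) = linext (\<lambda>x. b (g x)) f"
  by (simp add: linext_linext)

lemma linext_delta_id: "finite (supp f) \<Longrightarrow> linext delta f = (f :: 'b \<Rightarrow> 'k::comm_ring_1)"
  by (rule ext) (simp add: linext_def delta_def supp_def if_distrib[of "(*) _"] sum.delta' cong: if_cong)

lemma linrel_eq_linext: "linrel R f = linext (\<lambda>x y. if R x y then 1 else 0) f"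
  unfolding linrel_def linext_def by (rule ext) (rule sum.cong, auto)

lemma tensor_map_eq_linext:
  "tensor_map \<phi> \<psi> F = linext (\<lambda>p (u, v). \<phi> (delta (fst p)) u * \<psi> (delta (snd p)) v) F"
  unfolding tensor_map_def linext_def by (rule ext) (auto simp: mult.assoc)

lemma tensor_map_linext:
  "tensor_map (linext a) (linext b) F = linext (\<lambda>p (u, v). a (fst p) u * b (snd p) v) F"
  by (simp add: tensor_map_eq_linext)

lemma delta_Pair: "(\<lambda>(u, v). delta x u * delta y v) = (delta (x, y) :: _ \<Rightarrow> 'k::comm_ring_1)"
  by (auto simp: delta_def)

lemma tensor_map_linext_delta:
  "tensor_map (linext (\<lambda>x. delta (g x))) (linext (\<lambda>y. delta (h y))) F =
   linext (\<lambda>p. delta (g (fst p), h (snd p))) (F :: _ \<Rightarrow> 'k::comm_ring_1)"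
  by (simp add: tensor_map_linext delta_Pair)

lemma linext_tensor:
  assumes "finite (supp f)" "finite (supp g)"
  shows "linext (\<lambda>q (u, v). a (fst q) u * b (snd q) v) (\<lambda>(x, y). f x * g y) =
         (\<lambda>(u, v). linext a f u * linext b g v)"
proof (intro ext, clarify)
  fix u v
  have "supp (\<lambda>(x, y). f x * g y) \<subseteq> supp f \<times> supp g" by (auto simp: supp_def)
  then have "linext (\<lambda>q (u, v). a (fst q) u * b (snd q) v) (\<lambda>(x, y). f x * g y) (u, v) =
      (\<Sum>(x, y)\<in>supp f \<times> supp g. f x * g y * (a x u * b y v))"
    using assms by (subst linext_eq_sum) (auto simp: split_def)
  also have "\<dots> = (\<Sum>x\<in>supp f. f x * a x u) * (\<Sum>y\<in>supp g. g y * b y v)"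
    by (simp add: sum_product sum.cartesian_product mult_ac)
  finally show "linext (\<lambda>q (u, v). a (fst q) u * b (snd q) v) (\<lambda>(x, y). f x * g y) (u, v) =
      linext a f u * linext b g v" by (simp add: linext_def)
qed

lemma tensor_map_comp:
  assumes G: "finite (supp G)"
    and c: "\<And>p. p \<in> supp G \<Longrightarrow> finite (supp (c (fst p)))"
    and d: "\<And>p. p \<in> supp G \<Longrightarrow> finite (supp (d (snd p)))"
  shows "tensor_map (linext a) (linext b) (tensor_map (linext c) (linext d) G) =
         tensor_map (\<lambda>f. linext a (linext c f)) (\<lambda>f. linext b (linext d f)) G"
proof -
  have "supp (\<lambda>(u, v). c (fst p) u * d (snd p) v) \<subseteq> supp (c (fst p)) \<times> supp (d (snd p))" for p
    by (auto simp: supp_def)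
  then have "finite (supp (\<lambda>(u, v). c (fst p) u * d (snd p) v))" if "p \<in> supp G" for p
    using c[OF that] d[OF that] by (meson finite_SigmaI finite_subset)
  then have "tensor_map (linext a) (linext b) (tensor_map (linext c) (linext d) G) =
      linext (\<lambda>p. linext (\<lambda>q (u, v). a (fst q) u * b (snd q) v) (\<lambda>(u, v). c (fst p) u * d (snd p) v)) G"
    unfolding tensor_map_linext using G by (rule linext_linext[rotated])
  also have "\<dots> = linext (\<lambda>p (u, v). linext a (c (fst p)) u * linext b (d (snd p)) v) G"
    using c d by (intro linext_cong) (simp add: linext_tensor)
  finally show ?thesis by (simp add: tensor_map_eq_linext)
qed

lemma linext_add:
  assumes "finite (supp f)" "finite (supp g)"
  shows "linext a (\<lambda>x. f x + g x) = (\<lambda>y. linext a f y + linext a g y)"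
proof
  fix y
  let ?A = "supp f \<union> supp g"
  have "finite ?A" "supp (\<lambda>x. f x + g x) \<subseteq> ?A" using assms by (auto simp: supp_def)
  then show "linext a (\<lambda>x. f x + g x) y = linext a f y + linext a g y"
    by (simp add: linext_eq_sum[of ?A] sum.distrib distrib_right)
qed

lemma linext_diff:
  assumes "finite (supp f)" "finite (supp g)"
  shows "linext a (\<lambda>x. f x - g x) = (\<lambda>y. linext a f y - linext a g y)"
proof
  fix y
  let ?A = "supp f \<union> supp g"
  have "finite ?A" "supp (\<lambda>x. f x - g x) \<subseteq> ?A" using assms by (auto simp: supp_def)
  then show "linext a (\<lambda>x. f x - g x) y = linext a f y - linext a g y"
    by (simp add: linext_eq_sum[of ?A] sum_subtractf left_diff_distrib)
qed

lemma linext_smult: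
  assumes "finite (supp f)"
  shows "linext a (\<lambda>x. c * f x) = (\<lambda>y. c * linext a f y)"
proof
  fix y
  have "supp (\<lambda>x. c * f x) \<subseteq> supp f" by (auto simp: supp_def)
  then show "linext a (\<lambda>x. c * f x) y = c * linext a f y"
    using assms by (simp add: linext_eq_sum[of "supp f"] sum_distrib_left mult.assoc)
qed

lemma linear_on_linext:
  fixes a :: "'b \<Rightarrow> 'c \<Rightarrow> 'k::comm_ring_1"
  assumes "\<And>x. x \<in> B \<Longrightarrow> a x \<in> fspace C"
  shows "linear_on (fspace B) (fspace C) (linext a)"
  unfolding linear_on_def
proof (intro conjI ballI allI)
  fix f g :: "'b \<Rightarrow> 'k" assume f: "f \<in> fspace B" and g: "g \<in> fspace B"
  show "linext a f \<in> fspace C" using f assms by (intro linext_in_fspace) (auto simp: fspace_iff)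
  show "linext a (\<lambda>x. f x + g x) = (\<lambda>y. linext a f y + linext a g y)"
    using f g by (simp add: fspace_iff linext_add)
next
  fix c and f :: "'b \<Rightarrow> 'k" assume "f \<in> fspace B"
  then show "linext a (\<lambda>x. c * f x) = (\<lambda>y. c * linext a f y)" by (simp add: fspace_iff linext_smult)
qed

lemma linear_on_comp:
  "linear_on U V \<phi> \<Longrightarrow> linear_on V W \<psi> \<Longrightarrow> linear_on U W (\<lambda>f. \<psi> (\<phi> f))"
  unfolding linear_on_def by simp

lemma linext_delta_in_fspace:
  assumes "finite (supp f)" "\<And>x. x \<in> supp f \<Longrightarrow> g x \<in> C"
  shows "linext (\<lambda>x. delta (g x)) f \<in> fspace C"
  using assms by (intro linext_in_fspace delta_in_fspace)

lemma linext_delta_inverse: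
  assumes "finite (supp f)" "\<And>x. x \<in> supp f \<Longrightarrow> g' (g x) = x"
  shows "linext (\<lambda>y. delta (g' y)) (linext (\<lambda>x. delta (g x)) f) = f"
proof -
  have "linext (\<lambda>y. delta (g' y)) (linext (\<lambda>x. delta (g x)) f) = linext delta f"
    using assms by (simp add: linext_linext_delta cong: linext_cong)
  then show ?thesis using assms(1) by (simp add: linext_delta_id)
qed

lemma bij_betw_linext_delta:
  assumes g: "bij_betw g B C"
  shows "bij_betw (linext (\<lambda>x. delta (g x)) :: ('b \<Rightarrow> 'k::comm_ring_1) \<Rightarrow> _) (fspace B) (fspace C)"
proof (rule bij_betw_byWitness[where f' = "linext (\<lambda>y. delta (inv_into B g y))"])
  have gB: "g x \<in> C" "inv_into B g (g x) = x" if "x \<in> B" for x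
    using g that by (auto simp: bij_betw_def inv_into_f_f)
  have gC: "inv_into B g y \<in> B" "g (inv_into B g y) = y" if "y \<in> C" for y
    using g that by (auto simp: bij_betw_def inv_into_into f_inv_into_f)
  show "\<forall>f\<in>fspace B. linext (\<lambda>y. delta (inv_into B g y)) (linext (\<lambda>x. delta (g x)) f) = (f :: _ \<Rightarrow> 'k)"
    using gB by (auto simp: fspace_iff subset_iff intro!: linext_delta_inverse)
  show "\<forall>h\<in>fspace C. linext (\<lambda>x. delta (g x)) (linext (\<lambda>y. delta (inv_into B g y)) h) = (h :: _ \<Rightarrow> 'k)"
    using gC by (auto simp: fspace_iff subset_iff intro!: linext_delta_inverse)
  show "linext (\<lambda>x. delta (g x)) ` fspace B \<subseteq> (fspace C :: (_ \<Rightarrow> 'k) set)"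
  proof (rule image_subsetI)
    fix f :: "_ \<Rightarrow> 'k" assume "f \<in> fspace B"
    then show "linext (\<lambda>x. delta (g x)) f \<in> fspace C"
      using gB by (intro linext_delta_in_fspace) (auto simp: fspace_iff)
  qed
  show "linext (\<lambda>y. delta (inv_into B g y)) ` fspace C \<subseteq> (fspace B :: (_ \<Rightarrow> 'k) set)"
  proof (rule image_subsetI)
    fix h :: "_ \<Rightarrow> 'k" assume "h \<in> fspace C"
    then show "linext (\<lambda>y. delta (inv_into B g y)) h \<in> fspace B"
      using gC by (intro linext_delta_in_fspace) (auto simp: fspace_iff)
  qed
qed

lemma linext_delta_inj:
  assumes g: "inj_on g B" and h: "supp h \<subseteq> B" "finite (supp h)"
  shows "linext (\<lambda>y. delta (g y)) h z = (if z \<in> g ` B then h (inv_into B g z) else 0)"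
proof (cases "z \<in> g ` B")
  case True
  then obtain x where x: "x \<in> B" "z = g x" by auto
  have "linext (\<lambda>y. delta (g y)) h z = (\<Sum>y\<in>supp h. if y = x then h y else 0)"
    unfolding linext_def delta_def x(2)
    by (intro sum.cong refl) (use g h x(1) in \<open>auto simp: inj_on_eq_iff subsetD\<close>)
  then show ?thesis using x g h(2) by (simp add: sum.delta) (simp add: supp_def)
next
  case False
  then show ?thesis using h(1) by (force simp: linext_def delta_def intro!: sum.neutral)
qed

lemma linext_unitriangular_top:
  fixes a :: "'b \<Rightarrow> 'b \<Rightarrow> 'k::comm_ring_1" and rk :: "'b \<Rightarrow> nat"
  assumes diag: "\<And>x. x \<in> B \<Longrightarrow> a x x = 1"
    and tri: "\<And>x y. x \<in> B \<Longrightarrow> y \<noteq> x \<Longrightarrow> a x y \<noteq> 0 \<Longrightarrow> rk y < rk x"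
    and h: "supp h \<subseteq> B" "finite (supp h)" and top: "\<And>y. y \<in> supp h \<Longrightarrow> rk y \<le> rk z"
  shows "linext a h z = h z"
proof -
  have "linext a h z = (\<Sum>y\<in>supp h. if y = z then h z else 0)"
    unfolding linext_def
  proof (intro sum.cong refl)
    fix y assume y: "y \<in> supp h"
    have "a y z = 0" if "y \<noteq> z"
      using tri[of y z] top[OF y] subsetD[OF h(1) y] that by fastforce
    then show "h y * a y z = (if y = z then h z else 0)"
      using diag[of y] subsetD[OF h(1) y] by auto
  qed
  then show ?thesis using h(2) by (simp add: sum.delta) (simp add: supp_def)
qed

lemma inj_on_unitriangular:
  fixes a :: "'b \<Rightarrow> 'b \<Rightarrow> 'k::comm_ring_1" and rk :: "'b \<Rightarrow> nat"
  assumes diag: "\<And>x. x \<in> B \<Longrightarrow> a x x = 1"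
    and tri: "\<And>x y. x \<in> B \<Longrightarrow> y \<noteq> x \<Longrightarrow> a x y \<noteq> 0 \<Longrightarrow> rk y < rk x"
  shows "inj_on (linext a) (fspace B)"
proof (rule inj_onI, rule ccontr)
  fix f g :: "'b \<Rightarrow> 'k"
  assume f: "f \<in> fspace B" and g: "g \<in> fspace B" and eq: "linext a f = linext a g" and "f \<noteq> g"
  define h where "h = (\<lambda>x. f x - g x)"
  have h: "supp h \<subseteq> B" "finite (supp h)" using fspace_diff[OF f g] by (simp_all add: h_def fspace_iff)
  have "linext a h = (\<lambda>y. 0)" using f g eq by (simp add: h_def fspace_iff linext_diff)
  have "supp h \<noteq> {}" using \<open>f \<noteq> g\<close> by (auto simp: h_def supp_def)
  then have "Max (rk ` supp h) \<in> rk ` supp h" using h(2) by (intro Max_in) auto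
  then obtain z where z: "z \<in> supp h" "rk z = Max (rk ` supp h)" by auto
  have "linext a h z = h z" using h z by (intro linext_unitriangular_top[of B a rk, OF diag tri]) auto
  then show False using \<open>linext a h = (\<lambda>y. 0)\<close> z(1) by (simp add: supp_def)
qed

text \<open>Induction on n, peeling off the part of g of rank n, on which linext a is the identity.\<close>
lemma unitriangular_surj_below:
  fixes a :: "'b \<Rightarrow> 'b \<Rightarrow> 'k::comm_ring_1" and rk :: "'b \<Rightarrow> nat"
  assumes col: "\<And>x. x \<in> B \<Longrightarrow> a x \<in> fspace B"
    and diag: "\<And>x. x \<in> B \<Longrightarrow> a x x = 1"
    and tri: "\<And>x y. x \<in> B \<Longrightarrow> y \<noteq> x \<Longrightarrow> a x y \<noteq> 0 \<Longrightarrow> rk y < rk x"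
    and "g \<in> fspace B" "\<forall>y\<in>supp g. rk y < n"
  shows "g \<in> linext a ` fspace B"
  using assms(4,5)
proof (induction n arbitrary: g)
  case 0
  then have "g = linext a (\<lambda>x. 0)" by (auto simp: supp_def linext_def)
  moreover have "(\<lambda>x. 0) \<in> fspace B" by (simp add: fspace_def)
  ultimately show ?case by blast
next
  case (Suc n)
  define c where "c y = (if rk y = n then g y else 0)" for y
  have c: "c \<in> fspace B" using Suc.prems(1) by (rule fspace_supp_subset) (auto simp: c_def supp_def)
  define g' where "g' y = g y - linext a c y" for y
  have "linext a c \<in> fspace B" using c col by (intro linext_in_fspace) (auto simp: fspace_iff subset_iff)
  then have g': "g' \<in> fspace B" unfolding g'_def using Suc.prems(1) by (intro fspace_diff)
  have "g' y = 0" if "n \<le> rk y" for y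
  proof -
    have lc: "linext a c y = c y"
      using c that by (intro linext_unitriangular_top[of B a rk, OF diag tri])
        (auto simp: fspace_iff c_def supp_def split: if_splits)
    show ?thesis
    proof (cases "rk y = n")
      case False
      then have "y \<notin> supp g" using Suc.prems(2) that by fastforce
      then show ?thesis using False by (simp add: g'_def lc c_def supp_def)
    qed (simp add: g'_def lc c_def)
  qed
  then have "\<forall>y\<in>supp g'. rk y < n" unfolding supp_def using not_less by blast
  then obtain f' where f': "f' \<in> fspace B" "linext a f' = g'" using Suc.IH g' by blast
  have "linext a (\<lambda>x. f' x + c x) = (\<lambda>y. g' y + linext a c y)"
    using f' c by (simp add: fspace_iff linext_add)
  then have "g = linext a (\<lambda>x. f' x + c x)" by (simp add: g'_def)
  then show ?case using fspace_add[OF f'(1) c] by blast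
qed

lemma bij_betw_unitriangular:
  fixes a :: "'b \<Rightarrow> 'b \<Rightarrow> 'k::comm_ring_1" and rk :: "'b \<Rightarrow> nat"
  assumes col: "\<And>x. x \<in> B \<Longrightarrow> a x \<in> fspace B"
    and diag: "\<And>x. x \<in> B \<Longrightarrow> a x x = 1"
    and tri: "\<And>x y. x \<in> B \<Longrightarrow> y \<noteq> x \<Longrightarrow> a x y \<noteq> 0 \<Longrightarrow> rk y < rk x"
  shows "bij_betw (linext a) (fspace B) (fspace B)"
proof -
  have "fspace B \<subseteq> linext a ` fspace B"
  proof
    fix g :: "'b \<Rightarrow> 'k" assume g: "g \<in> fspace B"
    then have "\<forall>y\<in>supp g. rk y < Suc (Max (rk ` supp g))" by (simp add: fspace_iff le_imp_less_Suc)
    with col diag tri g show "g \<in> linext a ` fspace B" by (rule unitriangular_surj_below)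
  qed
  moreover have "inj_on (linext a) (fspace B)" using diag tri by (rule inj_on_unitriangular)
  moreover have "linear_on (fspace B) (fspace B) (linext a)" using col by (rule linear_on_linext)
  ultimately show ?thesis by (auto simp: bij_betw_def linear_on_def)
qed

lemma relab_eq_linext: "relab H \<sigma> I = linext (\<lambda>x. delta (act H \<sigma> I x))"
  by (rule ext) (simp add: relab_def linrel_eq_linext delta_def)

lemma basis_lin_dual [simp]: "basis (lin_dual H) = basis H"
  and act_lin_dual [simp]: "act (lin_dual H) = act H"
  by (simp_all add: lin_dual_def)

lemma relab_lin_dual [simp]: "relab (lin_dual H) = relab H"
  by (simp add: relab_def[abs_def])

lemma species_iso_comp:
  fixes H :: "('a, 'b, 'k::comm_ring_1) lspecies"
  assumes \<phi>: "species_iso H K \<phi>" and \<psi>: "species_iso K L \<psi>"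
  shows "species_iso H L (\<lambda>I f. \<psi> I (\<phi> I f))"
  unfolding species_iso_def
proof (intro conjI allI impI)
  fix I :: "'a set" assume "finite I"
  then have "lin_iso (fspace (basis H I)) (fspace (basis K I)) (\<phi> I)"
    "lin_iso (fspace (basis K I)) (fspace (basis L I)) (\<psi> I)"
    using \<phi> \<psi> by (simp_all add: species_iso_def)
  then show "lin_iso (fspace (basis H I)) (fspace (basis L I)) (\<lambda>f. \<psi> I (\<phi> I f))"
    using bij_betw_trans[of "\<phi> I" _ _ "\<psi> I"] linear_on_comp[of _ _ "\<phi> I" _ "\<psi> I"]
    by (auto simp: lin_iso_def comp_def)
next
  fix I J :: "'a set" and \<sigma> and f :: "'b \<Rightarrow> 'k"
  assume I: "finite I" and \<sigma>: "bij_betw \<sigma> I J" and f: "f \<in> fspace (basis H I)"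
  have "\<phi> I f \<in> fspace (basis K I)"
    using \<phi> I f by (auto simp: species_iso_def lin_iso_def linear_on_def)
  then show "\<psi> J (\<phi> J (relab H \<sigma> I f)) = relab L \<sigma> I (\<psi> I (\<phi> I f))"
    using \<phi> \<psi> I \<sigma> f by (simp add: species_iso_def)
qed

lemma comonoid_morph_comp:
  fixes a :: "'a set \<Rightarrow> 'b \<Rightarrow> 'c \<Rightarrow> 'k::comm_ring_1" and b :: "'a set \<Rightarrow> 'c \<Rightarrow> 'd \<Rightarrow> 'k"
  assumes a: "comonoid_morph H K (\<lambda>I. linext (a I))" and b: "comonoid_morph K L (\<lambda>I. linext (b I))"
    and a_col: "\<And>I x. finite I \<Longrightarrow> x \<in> basis H I \<Longrightarrow> a I x \<in> fspace (basis K I)"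
    and comult_H: "\<And>S T f. finite S \<Longrightarrow> finite T \<Longrightarrow> f \<in> fspace (basis H (S \<union> T)) \<Longrightarrow>
       comult H S T f \<in> fspace (basis H S \<times> basis H T)"
  shows "comonoid_morph H L (\<lambda>I f. linext (b I) (linext (a I) f))"
  unfolding comonoid_morph_def
proof (intro conjI allI impI ballI)
  fix S T :: "'a set" and f :: "'b \<Rightarrow> 'k"
  assume S: "finite S" and T: "finite T" and ST: "S \<inter> T = {}"
    and f: "f \<in> fspace (basis H (S \<union> T))"
  have af: "linext (a (S \<union> T)) f \<in> fspace (basis K (S \<union> T))"
    using f S T by (intro linext_in_fspace a_col) (auto simp: fspace_iff)
  have G: "comult H S T f \<in> fspace (basis H S \<times> basis H T)" by (rule comult_H[OF S T f])
  have "comult L S T (linext (b (S \<union> T)) (linext (a (S \<union> T)) f)) =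
      tensor_map (linext (b S)) (linext (b T)) (comult K S T (linext (a (S \<union> T)) f))"
    using b S T ST af by (simp add: comonoid_morph_def)
  also have "\<dots> = tensor_map (linext (b S)) (linext (b T))
      (tensor_map (linext (a S)) (linext (a T)) (comult H S T f))"
    using a S T ST f by (simp add: comonoid_morph_def)
  also have "\<dots> = tensor_map (\<lambda>f. linext (b S) (linext (a S) f)) (\<lambda>f. linext (b T) (linext (a T) f))
      (comult H S T f)"
    using G a_col S T by (intro tensor_map_comp) (auto simp: fspace_iff)
  finally show "comult L S T (linext (b (S \<union> T)) (linext (a (S \<union> T)) f)) =
      tensor_map (\<lambda>f. linext (b S) (linext (a S) f)) (\<lambda>f. linext (b T) (linext (a T) f))
        (comult H S T f)" .
next
  fix f :: "'b \<Rightarrow> 'k" assume f: "f \<in> fspace (basis H {})"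
  then have "linext (a {}) f \<in> fspace (basis K {})"
    by (intro linext_in_fspace a_col) (auto simp: fspace_iff)
  then show "ccounit L (linext (b {}) (linext (a {}) f)) = ccounit H f"
    using a b f by (simp add: comonoid_morph_def)
qed

section \<open>Simplicial complexes\<close>

definition is_complex :: "'a set set \<Rightarrow> bool" where
  "is_complex Z \<longleftrightarrow> {} \<in> Z \<and> (\<forall>X\<in>Z. \<forall>Y. Y \<subseteq> X \<longrightarrow> Y \<in> Z)"

lemma SC_eq: "SC I = {\<Gamma>. \<Gamma> \<subseteq> Pow I \<and> is_complex \<Gamma>}"
  by (auto simp: SC_def is_complex_def)

lemma SC_empty: "SC {} = {{{}}}"
  by (auto simp: SC_def)

lemma finite_SC: "finite I \<Longrightarrow> finite (SC I)"
  unfolding SC_def by (rule finite_subset[of _ "Pow (Pow I)"]) auto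

lemma Un_in_SC: "\<Gamma>1 \<in> SC S \<Longrightarrow> \<Gamma>2 \<in> SC T \<Longrightarrow> \<Gamma>1 \<union> \<Gamma>2 \<in> SC (S \<union> T)"
  unfolding SC_def by auto

lemma Int_Pow_in_SC: "\<Gamma> \<in> SC U \<Longrightarrow> \<Gamma> \<inter> Pow S \<in> SC S"
  unfolding SC_def by auto

lemma Un_Int_Pow_disjoint:
  assumes ST: "S \<inter> T = {}" and Z: "Z1 \<subseteq> Pow S" "Z2 \<subseteq> Pow T" "{} \<in> Z1" "{} \<in> Z2"
  shows "(Z1 \<union> Z2) \<inter> Pow S = Z1" "(Z1 \<union> Z2) \<inter> Pow T = Z2"
proof -
  have empty: "X = {}" if "X \<subseteq> S" "X \<subseteq> T" for X using that ST by auto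
  have "X \<in> Z1" if "X \<in> Z2" "X \<subseteq> S" for X
    using empty[OF that(2)] that(1) Z(2,3) by auto
  moreover have "X \<in> Z2" if "X \<in> Z1" "X \<subseteq> T" for X
    using empty[OF _ that(2)] that(1) Z(1,4) by auto
  ultimately show "(Z1 \<union> Z2) \<inter> Pow S = Z1" "(Z1 \<union> Z2) \<inter> Pow T = Z2" using Z(1,2) by auto
qed

lemma SC_Un_Int_Pow:
  assumes "S \<inter> T = {}" "\<Gamma>1 \<in> SC S" "\<Gamma>2 \<in> SC T"
  shows "(\<Gamma>1 \<union> \<Gamma>2) \<inter> Pow S = \<Gamma>1" "(\<Gamma>1 \<union> \<Gamma>2) \<inter> Pow T = \<Gamma>2"
  using Un_Int_Pow_disjoint[of S T \<Gamma>1 \<Gamma>2] assms by (simp_all add: SC_def)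

definition relabel :: "('a \<Rightarrow> 'a) \<Rightarrow> 'a set set \<Rightarrow> 'a set set" where
  "relabel \<sigma> \<Gamma> = (\<lambda>X. \<sigma> ` X) ` \<Gamma>"

lemma relabel_comp: "relabel (\<tau> \<circ> \<sigma>) \<Gamma> = relabel \<tau> (relabel \<sigma> \<Gamma>)"
  by (simp add: relabel_def image_comp)

lemma relabel_cong: "(\<And>a. a \<in> A \<Longrightarrow> \<sigma> a = \<tau> a) \<Longrightarrow> \<Gamma> \<subseteq> Pow A \<Longrightarrow> relabel \<sigma> \<Gamma> = relabel \<tau> \<Gamma>"
  unfolding relabel_def by (intro image_cong refl) (auto intro!: image_cong)

lemma relabel_ident: "(\<And>a. a \<in> A \<Longrightarrow> \<sigma> a = a) \<Longrightarrow> \<Gamma> \<subseteq> Pow A \<Longrightarrow> relabel \<sigma> \<Gamma> = \<Gamma>"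
  using relabel_cong[of A \<sigma> id \<Gamma>] by (simp add: relabel_def)

lemma relabel_inv_into_left:
  assumes "inj_on \<sigma> I" "\<Gamma> \<subseteq> Pow I"
  shows "relabel (inv_into I \<sigma>) (relabel \<sigma> \<Gamma>) = \<Gamma>"
proof -
  have "relabel (inv_into I \<sigma> \<circ> \<sigma>) \<Gamma> = \<Gamma>" by (rule relabel_ident[of I]) (use assms in auto)
  then show ?thesis by (simp add: relabel_comp)
qed

lemma relabel_inv_into_right:
  assumes "\<Gamma> \<subseteq> Pow (\<sigma> ` I)"
  shows "relabel \<sigma> (relabel (inv_into I \<sigma>) \<Gamma>) = \<Gamma>"
proof -
  have "relabel (\<sigma> \<circ> inv_into I \<sigma>) \<Gamma> = \<Gamma>"
    by (rule relabel_ident[of "\<sigma> ` I"]) (use assms in \<open>auto simp: f_inv_into_f\<close>)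
  then show ?thesis by (simp add: relabel_comp)
qed

lemma relabel_Pow: "\<Gamma> \<subseteq> Pow I \<Longrightarrow> relabel \<sigma> \<Gamma> \<subseteq> Pow (\<sigma> ` I)"
  by (auto simp: relabel_def)

lemma inj_on_relabel:
  assumes "inj_on \<sigma> I"
  shows "inj_on (relabel \<sigma>) (Pow (Pow I))"
  by (rule inj_on_inverseI[where g = "relabel (inv_into I \<sigma>)"])
    (simp add: relabel_inv_into_left[OF assms])

lemma relabel_Int:
  assumes "inj_on \<sigma> I" "A \<subseteq> Pow I" "B \<subseteq> Pow I"
  shows "relabel \<sigma> (A \<inter> B) = relabel \<sigma> A \<inter> relabel \<sigma> B"
proof -
  have "inj_on (\<lambda>X. \<sigma> ` X) (Pow I)"
    using assms(1) by (auto simp: inj_on_def inj_on_image_eq_iff)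
  then show ?thesis unfolding relabel_def using assms(2,3) by (intro inj_on_image_Int) auto
qed

lemma is_complex_relabel:
  assumes \<Gamma>: "is_complex \<Gamma>"
  shows "is_complex (relabel \<sigma> \<Gamma>)"
  unfolding is_complex_def
proof (intro conjI ballI allI impI)
  show "{} \<in> relabel \<sigma> \<Gamma>" using \<Gamma> by (force simp: is_complex_def relabel_def)
  fix X' Y assume "X' \<in> relabel \<sigma> \<Gamma>" and Y: "Y \<subseteq> X'"
  then obtain X where X: "X \<in> \<Gamma>" "X' = \<sigma> ` X" by (auto simp: relabel_def)
  have "Y = \<sigma> ` {x \<in> X. \<sigma> x \<in> Y}" using X(2) Y by auto
  moreover have "{x \<in> X. \<sigma> x \<in> Y} \<in> \<Gamma>" using \<Gamma> X(1) by (auto simp: is_complex_def)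
  ultimately show "Y \<in> relabel \<sigma> \<Gamma>" by (auto simp: relabel_def)
qed

lemma relabel_SC: "bij_betw \<sigma> I J \<Longrightarrow> \<Gamma> \<in> SC I \<Longrightarrow> relabel \<sigma> \<Gamma> \<in> SC J"
  using relabel_Pow[of \<Gamma> I \<sigma>] by (auto simp: SC_eq bij_betw_def is_complex_relabel)

lemma bij_betw_relabel_SC:
  assumes \<sigma>: "bij_betw \<sigma> I J"
  shows "bij_betw (relabel \<sigma>) (SC I) (SC J)"
proof (rule bij_betw_imageI)
  show "inj_on (relabel \<sigma>) (SC I)"
    using \<sigma> by (intro inj_on_subset[OF inj_on_relabel]) (auto simp: bij_betw_def SC_def)
  show "relabel \<sigma> ` SC I = SC J"
  proof
    show "relabel \<sigma> ` SC I \<subseteq> SC J" using relabel_SC[OF \<sigma>] by blast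
    show "SC J \<subseteq> relabel \<sigma> ` SC I"
    proof
      fix \<Delta> assume \<Delta>: "\<Delta> \<in> SC J"
      have "\<Delta> = relabel \<sigma> (relabel (inv_into I \<sigma>) \<Delta>)"
        using \<Delta> \<sigma> by (simp add: relabel_inv_into_right bij_betw_def SC_def)
      moreover have "relabel (inv_into I \<sigma>) \<Delta> \<in> SC I"
        using \<Delta> by (rule relabel_SC[OF bij_betw_inv_into[OF \<sigma>]])
      ultimately show "\<Delta> \<in> relabel \<sigma> ` SC I" by blast
    qed
  qed
qed

definition count_subcomplexes :: "'a set set \<Rightarrow> nat" where
  "count_subcomplexes C = card {Z. Z \<subseteq> C \<and> is_complex Z}"

lemma count_subcomplexes_empty: "count_subcomplexes {{}} = 1"
proof -
  have sub: "{Z. Z \<subseteq> {{}} \<and> is_complex Z} = {{{}}}" by (auto simp: is_complex_def)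
  show ?thesis unfolding count_subcomplexes_def sub by simp
qed

lemma count_subcomplexes_relabel:
  assumes \<sigma>: "inj_on \<sigma> I" and C: "C \<subseteq> Pow I"
  shows "count_subcomplexes (relabel \<sigma> C) = count_subcomplexes C"
proof -
  have "{Z. Z \<subseteq> relabel \<sigma> C \<and> is_complex Z} = relabel \<sigma> ` {Z. Z \<subseteq> C \<and> is_complex Z}"
  proof (intro equalityI subsetI)
    fix Z assume Z: "Z \<in> {Z. Z \<subseteq> relabel \<sigma> C \<and> is_complex Z}"
    then have "Z \<subseteq> Pow (\<sigma> ` I)" using relabel_Pow[OF C] by auto
    then have "Z = relabel \<sigma> (relabel (inv_into I \<sigma>) Z)" by (simp add: relabel_inv_into_right)
    moreover have "relabel (inv_into I \<sigma>) Z \<subseteq> relabel (inv_into I \<sigma>) (relabel \<sigma> C)"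
      using Z by (auto simp: relabel_def)
    then have "relabel (inv_into I \<sigma>) Z \<subseteq> C" by (simp add: relabel_inv_into_left[OF \<sigma> C])
    ultimately show "Z \<in> relabel \<sigma> ` {Z. Z \<subseteq> C \<and> is_complex Z}"
      using Z is_complex_relabel by blast
  next
    fix Z assume "Z \<in> relabel \<sigma> ` {Z. Z \<subseteq> C \<and> is_complex Z}"
    then obtain Z0 where "Z0 \<subseteq> C" "is_complex Z0" "Z = relabel \<sigma> Z0" by auto
    moreover have "relabel \<sigma> Z0 \<subseteq> relabel \<sigma> C" using \<open>Z0 \<subseteq> C\<close> by (auto simp: relabel_def)
    ultimately show "Z \<in> {Z. Z \<subseteq> relabel \<sigma> C \<and> is_complex Z}"
      by (simp add: is_complex_relabel)
  qed
  moreover have "inj_on (relabel \<sigma>) {Z. Z \<subseteq> C \<and> is_complex Z}"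
    using C by (intro inj_on_subset[OF inj_on_relabel[OF \<sigma>]]) auto
  ultimately show ?thesis by (simp add: count_subcomplexes_def card_image)
qed

text \<open>On disjoint ground sets a subcomplex of C1 \<union> C2 is the union of its two restrictions.\<close>
lemma count_subcomplexes_Un:
  assumes ST: "S \<inter> T = {}" and C: "C1 \<subseteq> Pow S" "C2 \<subseteq> Pow T" "{} \<in> C1" "{} \<in> C2"
  shows "count_subcomplexes (C1 \<union> C2) = count_subcomplexes C1 * count_subcomplexes C2"
proof -
  let ?sub = "\<lambda>C. {Z. Z \<subseteq> C \<and> is_complex Z}"
  have "bij_betw (\<lambda>Z. (Z \<inter> Pow S, Z \<inter> Pow T)) (?sub (C1 \<union> C2)) (?sub C1 \<times> ?sub C2)"
  proof (rule bij_betw_byWitness[where f' = "\<lambda>(Z1, Z2). Z1 \<union> Z2"])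
    show "\<forall>Z\<in>?sub (C1 \<union> C2). (\<lambda>(Z1, Z2). Z1 \<union> Z2) (Z \<inter> Pow S, Z \<inter> Pow T) = Z"
      using C by auto
    show "\<forall>p\<in>?sub C1 \<times> ?sub C2. (\<lambda>Z. (Z \<inter> Pow S, Z \<inter> Pow T)) ((\<lambda>(Z1, Z2). Z1 \<union> Z2) p) = p"
    proof
      fix p assume p: "p \<in> ?sub C1 \<times> ?sub C2"
      obtain Z1 Z2 where p12: "p = (Z1, Z2)" by (cases p)
      have "Z1 \<subseteq> Pow S" "Z2 \<subseteq> Pow T" "{} \<in> Z1" "{} \<in> Z2"
        using p C by (auto simp: p12 is_complex_def)
      then show "(\<lambda>Z. (Z \<inter> Pow S, Z \<inter> Pow T)) ((\<lambda>(Z1, Z2). Z1 \<union> Z2) p) = p"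
        using Un_Int_Pow_disjoint[OF ST] by (simp add: p12)
    qed
    show "(\<lambda>Z. (Z \<inter> Pow S, Z \<inter> Pow T)) ` ?sub (C1 \<union> C2) \<subseteq> ?sub C1 \<times> ?sub C2"
    proof (rule image_subsetI)
      fix Z assume "Z \<in> ?sub (C1 \<union> C2)"
      then have Z: "Z \<subseteq> C1 \<union> C2" "is_complex Z" by auto
      have "Z \<inter> Pow S \<subseteq> C1" "Z \<inter> Pow T \<subseteq> C2"
        using Z(1) Un_Int_Pow_disjoint[OF ST C] by auto
      moreover have "is_complex (Z \<inter> Pow S)" "is_complex (Z \<inter> Pow T)"
        using Z(2) by (auto simp: is_complex_def)
      ultimately show "(Z \<inter> Pow S, Z \<inter> Pow T) \<in> ?sub C1 \<times> ?sub C2" by simp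
    qed
    show "(\<lambda>(Z1, Z2). Z1 \<union> Z2) ` (?sub C1 \<times> ?sub C2) \<subseteq> ?sub (C1 \<union> C2)"
      by (auto simp: is_complex_def)
  qed
  then show ?thesis
    by (simp add: count_subcomplexes_def bij_betw_same_card card_cartesian_product)
qed

lemma basis_kSC [simp]: "basis kSC = SC"
  by (simp add: kSC_def)

lemma act_kSC [simp]: "act kSC \<sigma> I = relabel \<sigma>"
  by (simp add: kSC_def relabel_def[abs_def])

lemma relab_kSC: "relab kSC \<sigma> I = linext (\<lambda>\<Gamma>. delta (relabel \<sigma> \<Gamma>))"
  by (simp add: relab_eq_linext)

lemma mult_kSC: "mult kSC S T = linext (\<lambda>p. delta (fst p \<union> snd p))"
  by (rule ext) (simp add: kSC_def linrel_eq_linext delta_def)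

lemma comult_kSC: "comult kSC S T = linext (\<lambda>\<Gamma>. delta (\<Gamma> \<inter> Pow S, \<Gamma> \<inter> Pow T))"
  by (rule ext) (simp add: kSC_def linrel_eq_linext delta_def)

lemma comult_kSC_in_fspace:
  "finite S \<Longrightarrow> finite T \<Longrightarrow> f \<in> fspace (SC (S \<union> T)) \<Longrightarrow> comult kSC S T f \<in> fspace (SC S \<times> SC T)"
  unfolding comult_kSC by (intro linext_in_fspace delta_in_fspace) (auto simp: fspace_iff Int_Pow_in_SC)

lemma munit_kSC: "munit kSC = delta {{}}"
  and ccounit_kSC: "ccounit kSC f = f {{}}"
  by (simp_all add: kSC_def)

lemma mult_dual_kSC:
  assumes "finite S" "finite T"
  shows "mult (lin_dual kSC) S T F = (\<lambda>\<Gamma>. if \<Gamma> \<in> SC (S \<union> T) then F (\<Gamma> \<inter> Pow S, \<Gamma> \<inter> Pow T) else 0)"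
  using assms by (auto simp: lin_dual_def comult_kSC sum_mult_delta finite_SC Int_Pow_in_SC)

lemma comult_dual_kSC:
  assumes "finite S" "finite T"
  shows "comult (lin_dual kSC) S T h = (\<lambda>p. if p \<in> SC S \<times> SC T then h (fst p \<union> snd p) else 0)"
  using assms by (auto simp: lin_dual_def mult_kSC sum_mult_delta finite_SC Un_in_SC)

lemma munit_dual_kSC: "munit (lin_dual kSC) = delta {{}}"
  by (auto simp: lin_dual_def SC_empty ccounit_kSC delta_def)

lemma ccounit_dual_kSC: "ccounit (lin_dual kSC) h = h {{}}"
  by (simp add: lin_dual_def SC_empty munit_kSC delta_def)

section \<open>Self-duality\<close>

text \<open>The guard \<Delta> \<in> SC I keeps every column inside the basis of kSC*[I].\<close>
definition pairing :: "'a set \<Rightarrow> 'a set set \<Rightarrow> 'a set set \<Rightarrow> 'k::comm_ring_1" where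
  "pairing I \<Gamma> \<Delta> = (if \<Delta> \<in> SC I then of_nat (count_subcomplexes (\<Gamma> \<inter> \<Delta>)) else 0)"

definition theta :: "'a set \<Rightarrow> ('a set set \<Rightarrow> 'k::comm_ring_1) \<Rightarrow> 'a set set \<Rightarrow> 'k" where
  "theta I = linext (pairing I)"

lemma pairing_in_fspace: "finite I \<Longrightarrow> pairing I \<Gamma> \<in> fspace (SC I)"
  by (rule fspaceI[OF finite_SC]) (auto simp: supp_def pairing_def)

lemma count_subcomplexes_Un_Int:
  assumes "S \<inter> T = {}" "\<Gamma>1 \<in> SC S" "\<Gamma>2 \<in> SC T" "{} \<in> \<Delta>"
  shows "count_subcomplexes ((\<Gamma>1 \<union> \<Gamma>2) \<inter> \<Delta>) = count_subcomplexes (\<Gamma>1 \<inter> \<Delta>) * count_subcomplexes (\<Gamma>2 \<inter> \<Delta>)"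
proof -
  have "(\<Gamma>1 \<union> \<Gamma>2) \<inter> \<Delta> = (\<Gamma>1 \<inter> \<Delta>) \<union> (\<Gamma>2 \<inter> \<Delta>)" by blast
  moreover have "\<Gamma>1 \<inter> \<Delta> \<subseteq> Pow S" "\<Gamma>2 \<inter> \<Delta> \<subseteq> Pow T" "{} \<in> \<Gamma>1 \<inter> \<Delta>" "{} \<in> \<Gamma>2 \<inter> \<Delta>"
    using assms by (auto simp: SC_def)
  ultimately show ?thesis using count_subcomplexes_Un[OF assms(1)] by simp
qed

lemma pairing_Un_left:
  assumes "S \<inter> T = {}" "\<Gamma>1 \<in> SC S" "\<Gamma>2 \<in> SC T" "\<Delta> \<in> SC (S \<union> T)"
  shows "pairing (S \<union> T) (\<Gamma>1 \<union> \<Gamma>2) \<Delta> = pairing S \<Gamma>1 (\<Delta> \<inter> Pow S) * pairing T \<Gamma>2 (\<Delta> \<inter> Pow T)"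
proof -
  have "\<Gamma>1 \<inter> (\<Delta> \<inter> Pow S) = \<Gamma>1 \<inter> \<Delta>" "\<Gamma>2 \<inter> (\<Delta> \<inter> Pow T) = \<Gamma>2 \<inter> \<Delta>"
    using assms(2,3) by (auto simp: SC_def)
  moreover have "{} \<in> \<Delta>" using assms(4) by (simp add: SC_def)
  ultimately show ?thesis
    using assms count_subcomplexes_Un_Int[OF assms(1-3)] by (simp add: pairing_def Int_Pow_in_SC)
qed

lemma pairing_Un_right:
  assumes "S \<inter> T = {}" "\<Delta>1 \<in> SC S" "\<Delta>2 \<in> SC T" "\<Gamma> \<in> SC (S \<union> T)"
  shows "pairing (S \<union> T) \<Gamma> (\<Delta>1 \<union> \<Delta>2) = pairing S (\<Gamma> \<inter> Pow S) \<Delta>1 * pairing T (\<Gamma> \<inter> Pow T) \<Delta>2"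
proof -
  have "\<Gamma> \<inter> Pow S \<inter> \<Delta>1 = \<Delta>1 \<inter> \<Gamma>" "\<Gamma> \<inter> Pow T \<inter> \<Delta>2 = \<Delta>2 \<inter> \<Gamma>" "\<Gamma> \<inter> (\<Delta>1 \<union> \<Delta>2) = (\<Delta>1 \<union> \<Delta>2) \<inter> \<Gamma>"
    using assms(2,3) by (auto simp: SC_def)
  moreover have "{} \<in> \<Gamma>" using assms(4) by (simp add: SC_def)
  ultimately show ?thesis
    using assms count_subcomplexes_Un_Int[OF assms(1-3)] by (simp add: pairing_def Un_in_SC)
qed

lemma pairing_relabel:
  assumes \<sigma>: "bij_betw \<sigma> I J" and "\<Gamma> \<in> SC I" "\<Delta> \<in> SC I"
  shows "pairing J (relabel \<sigma> \<Gamma>) (relabel \<sigma> \<Delta>) = pairing I \<Gamma> \<Delta>"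
proof -
  have inj: "inj_on \<sigma> I" using \<sigma> by (simp add: bij_betw_def)
  have "relabel \<sigma> \<Gamma> \<inter> relabel \<sigma> \<Delta> = relabel \<sigma> (\<Gamma> \<inter> \<Delta>)"
    using assms by (simp add: relabel_Int[OF inj] SC_def)
  moreover have "count_subcomplexes (relabel \<sigma> (\<Gamma> \<inter> \<Delta>)) = count_subcomplexes (\<Gamma> \<inter> \<Delta>)"
    using assms by (intro count_subcomplexes_relabel[OF inj]) (auto simp: SC_def)
  ultimately show ?thesis using assms by (simp add: pairing_def relabel_SC)
qed

lemma theta_relab:
  fixes f :: "'a set set \<Rightarrow> 'k::comm_ring_1"
  assumes I: "finite I" and \<sigma>: "bij_betw \<sigma> I J" and f: "f \<in> fspace (SC I)"
  shows "theta J (relab kSC \<sigma> I f) = relab (lin_dual kSC) \<sigma> I (theta I f)"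
proof -
  have rel: "bij_betw (relabel \<sigma>) (SC I) (SC J)" by (rule bij_betw_relabel_SC[OF \<sigma>])
  have col: "linext (\<lambda>\<Delta>. delta (relabel \<sigma> \<Delta>)) (pairing I \<Gamma>) = pairing J (relabel \<sigma> \<Gamma>)"
    if \<Gamma>: "\<Gamma> \<in> SC I" for \<Gamma>
  proof
    fix Z
    have "linext (\<lambda>\<Delta>. delta (relabel \<sigma> \<Delta>)) (pairing I \<Gamma>) Z =
        (if Z \<in> SC J then pairing I \<Gamma> (inv_into (SC I) (relabel \<sigma>) Z) else 0)"
      using rel pairing_in_fspace[OF I, of \<Gamma>]
      by (subst linext_delta_inj) (auto simp: bij_betw_def fspace_iff)
    also have "\<dots> = pairing J (relabel \<sigma> \<Gamma>) Z"
    proof (cases "Z \<in> SC J")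
      case True
      then obtain \<Delta> where \<Delta>: "\<Delta> \<in> SC I" "Z = relabel \<sigma> \<Delta>" using rel by (auto simp: bij_betw_def)
      then have "inv_into (SC I) (relabel \<sigma>) Z = \<Delta>" using rel by (simp add: bij_betw_def inv_into_f_f)
      then show ?thesis using True \<Delta>(2) by (simp add: pairing_relabel[OF \<sigma> \<Gamma> \<Delta>(1)])
    qed (simp add: pairing_def)
    finally show "linext (\<lambda>\<Delta>. delta (relabel \<sigma> \<Delta>)) (pairing I \<Gamma>) Z = pairing J (relabel \<sigma> \<Gamma>) Z" .
  qed
  have "relab (lin_dual kSC) \<sigma> I (theta I f) =
      linext (\<lambda>\<Gamma>. linext (\<lambda>\<Delta>. delta (relabel \<sigma> \<Delta>)) (pairing I \<Gamma>)) f"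
    unfolding theta_def relab_lin_dual relab_kSC using f pairing_in_fspace[OF I]
    by (intro linext_linext) (auto simp: fspace_iff)
  also have "\<dots> = linext (\<lambda>\<Gamma>. pairing J (relabel \<sigma> \<Gamma>)) f"
    using col f by (intro linext_cong) (auto simp: fspace_iff)
  also have "\<dots> = theta J (relab kSC \<sigma> I f)"
    unfolding theta_def relab_kSC using f by (simp add: linext_linext fspace_iff)
  finally show ?thesis by simp
qed

lemma theta_mult:
  assumes S: "finite S" and T: "finite T" and ST: "S \<inter> T = {}" and F: "F \<in> fspace (SC S \<times> SC T)"
  shows "theta (S \<union> T) (mult kSC S T F) = mult (lin_dual kSC) S T (tensor_map (theta S) (theta T) F)"
proof
  fix \<Delta>
  have "theta (S \<union> T) (mult kSC S T F) \<Delta> = (\<Sum>p\<in>supp F. F p * pairing (S \<union> T) (fst p \<union> snd p) \<Delta>)"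
    using F by (simp add: theta_def mult_kSC linext_linext fspace_iff) (simp add: linext_def)
  also have "\<dots> = mult (lin_dual kSC) S T (tensor_map (theta S) (theta T) F) \<Delta>"
  proof (cases "\<Delta> \<in> SC (S \<union> T)")
    case True
    then show ?thesis using F
      by (auto simp: mult_dual_kSC[OF S T] theta_def tensor_map_linext linext_def fspace_iff
          pairing_Un_left[OF ST] mult.assoc intro!: sum.cong)
  qed (simp add: pairing_def mult_dual_kSC[OF S T])
  finally show "theta (S \<union> T) (mult kSC S T F) \<Delta> =
      mult (lin_dual kSC) S T (tensor_map (theta S) (theta T) F) \<Delta>" .
qed

lemma theta_comult:
  assumes S: "finite S" and T: "finite T" and ST: "S \<inter> T = {}" and f: "f \<in> fspace (SC (S \<union> T))"
  shows "comult (lin_dual kSC) S T (theta (S \<union> T) f) = tensor_map (theta S) (theta T) (comult kSC S T f)"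
proof (intro ext, clarify)
  fix \<Delta>1 \<Delta>2
  have "tensor_map (theta S) (theta T) (comult kSC S T f) (\<Delta>1, \<Delta>2) =
      (\<Sum>\<Gamma>\<in>supp f. f \<Gamma> * (pairing S (\<Gamma> \<inter> Pow S) \<Delta>1 * pairing T (\<Gamma> \<inter> Pow T) \<Delta>2))"
    using f by (simp add: theta_def comult_kSC tensor_map_linext linext_linext fspace_iff)
      (simp add: linext_def)
  also have "\<dots> = comult (lin_dual kSC) S T (theta (S \<union> T) f) (\<Delta>1, \<Delta>2)"
  proof (cases "(\<Delta>1, \<Delta>2) \<in> SC S \<times> SC T")
    case True
    then show ?thesis using f
      by (auto simp: comult_dual_kSC[OF S T] theta_def linext_def fspace_iff pairing_Un_right[OF ST]
          intro!: sum.cong)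
  qed (auto simp: pairing_def comult_dual_kSC[OF S T])
  finally show "comult (lin_dual kSC) S T (theta (S \<union> T) f) (\<Delta>1, \<Delta>2) =
      tensor_map (theta S) (theta T) (comult kSC S T f) (\<Delta>1, \<Delta>2)" by simp
qed

lemma theta_munit: "theta {} (munit kSC) = munit (lin_dual kSC)"
  by (simp add: theta_def munit_kSC)
    (auto simp: munit_dual_kSC pairing_def SC_empty count_subcomplexes_empty delta_def)

lemma theta_ccounit:
  assumes "f \<in> fspace (SC {})"
  shows "ccounit (lin_dual kSC) (theta {} f) = ccounit kSC f"
proof -
  have "theta {} f {{}} = (\<Sum>\<Gamma>\<in>{{{}}}. f \<Gamma> * pairing {} \<Gamma> {{}})"
    using assms unfolding theta_def by (intro linext_eq_sum) (auto simp: fspace_iff SC_empty)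
  then show ?thesis
    by (simp add: ccounit_dual_kSC ccounit_kSC pairing_def SC_empty count_subcomplexes_empty)
qed

definition zeta :: "'a set \<Rightarrow> 'a set set \<Rightarrow> 'a set set \<Rightarrow> 'k::comm_ring_1" where
  "zeta I Z \<Gamma> = (if Z \<in> SC I \<and> \<Gamma> \<in> SC I \<and> Z \<subseteq> \<Gamma> then 1 else 0)"

lemma zeta_in_fspace: "finite I \<Longrightarrow> zeta I Z \<in> fspace (SC I)"
  and zeta_transpose_in_fspace: "finite I \<Longrightarrow> (\<lambda>Z. zeta I Z \<Gamma>) \<in> fspace (SC I)"
  by (auto intro!: fspaceI[OF finite_SC] simp: supp_def zeta_def split: if_splits)

lemma pairing_eq_zeta:
  assumes I: "finite I" and \<Gamma>: "\<Gamma> \<in> SC I"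
  shows "(pairing I \<Gamma> :: _ \<Rightarrow> 'k::comm_ring_1) = linext (zeta I) (\<lambda>Z. zeta I Z \<Gamma>)"
proof
  fix \<Delta>
  have "linext (zeta I) (\<lambda>Z. zeta I Z \<Gamma>) \<Delta> = (\<Sum>Z\<in>SC I. zeta I Z \<Gamma> * zeta I Z \<Delta> :: 'k)"
    using zeta_transpose_in_fspace[OF I]
    by (intro linext_eq_sum[OF finite_SC[OF I]]) (auto simp: fspace_iff)
  also have "\<dots> = (\<Sum>Z\<in>SC I. if Z \<subseteq> \<Gamma> \<and> Z \<subseteq> \<Delta> \<and> \<Delta> \<in> SC I then 1 else 0)"
    using \<Gamma> by (intro sum.cong) (auto simp: zeta_def)
  also have "\<dots> = of_nat (card {Z \<in> SC I. Z \<subseteq> \<Gamma> \<and> Z \<subseteq> \<Delta> \<and> \<Delta> \<in> SC I})"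
    by (simp add: sum.inter_filter[OF finite_SC[OF I], symmetric])
  also have "\<dots> = pairing I \<Gamma> \<Delta>"
  proof (cases "\<Delta> \<in> SC I")
    case True
    have "{Z \<in> SC I. Z \<subseteq> \<Gamma> \<and> Z \<subseteq> \<Delta> \<and> \<Delta> \<in> SC I} = {Z. Z \<subseteq> \<Gamma> \<inter> \<Delta> \<and> is_complex Z}"
      using \<Gamma> True by (auto simp: SC_eq)
    then show ?thesis using True by (simp add: pairing_def count_subcomplexes_def)
  qed (simp add: pairing_def)
  finally show "(pairing I \<Gamma> \<Delta> :: 'k) = linext (zeta I) (\<lambda>Z. zeta I Z \<Gamma>) \<Delta>" by simp
qed

lemma theta_eq_zeta:
  assumes I: "finite I" and f: "f \<in> fspace (SC I)"
  shows "theta I f = linext (zeta I) (linext (\<lambda>\<Gamma> Z. zeta I Z \<Gamma>) f)"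
proof -
  have "linext (zeta I) (linext (\<lambda>\<Gamma> Z. zeta I Z \<Gamma>) f) = linext (\<lambda>\<Gamma>. linext (zeta I) (\<lambda>Z. zeta I Z \<Gamma>)) f"
    using f zeta_transpose_in_fspace[OF I] by (intro linext_linext) (auto simp: fspace_iff)
  also have "\<dots> = theta I f"
    unfolding theta_def using f by (intro linext_cong) (auto simp: fspace_iff pairing_eq_zeta[OF I])
  finally show ?thesis by simp
qed

lemma bij_betw_theta:
  assumes I: "finite I"
  shows "bij_betw (theta I :: ('a set set \<Rightarrow> 'k::comm_ring_1) \<Rightarrow> _) (fspace (SC I)) (fspace (SC I))"
proof -
  have fin: "finite \<Gamma>" if "\<Gamma> \<in> SC I" for \<Gamma>
    using that I by (auto simp: SC_def intro: finite_subset[of _ "Pow I"])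
  have lower: "bij_betw (linext (\<lambda>\<Gamma> Z. zeta I Z \<Gamma> :: 'k)) (fspace (SC I)) (fspace (SC I))"
  proof (rule bij_betw_unitriangular[where rk = card])
    show "(\<lambda>Z. zeta I Z \<Gamma>) \<in> fspace (SC I)" for \<Gamma> by (rule zeta_transpose_in_fspace[OF I])
    show "zeta I \<Gamma> \<Gamma> = 1" if "\<Gamma> \<in> SC I" for \<Gamma> using that by (simp add: zeta_def)
    fix \<Gamma> Z assume "\<Gamma> \<in> SC I" "Z \<noteq> \<Gamma>" "zeta I Z \<Gamma> \<noteq> 0"
    then show "card Z < card \<Gamma>"
      using fin by (auto simp: zeta_def intro!: psubset_card_mono split: if_splits)
  qed
  have upper: "bij_betw (linext (zeta I) :: (_ \<Rightarrow> 'k) \<Rightarrow> _) (fspace (SC I)) (fspace (SC I))"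
  proof (rule bij_betw_unitriangular[where rk = "\<lambda>\<Gamma>. card (Pow I) - card \<Gamma>"])
    show "zeta I Z \<in> fspace (SC I)" for Z by (rule zeta_in_fspace[OF I])
    show "zeta I Z Z = 1" if "Z \<in> SC I" for Z using that by (simp add: zeta_def)
    fix Z \<Gamma> assume Z: "Z \<in> SC I" and "\<Gamma> \<noteq> Z" "zeta I Z \<Gamma> \<noteq> 0"
    then have "Z \<subset> \<Gamma>" "\<Gamma> \<subseteq> Pow I" by (auto simp: zeta_def SC_def split: if_splits)
    then have "card Z < card \<Gamma>" "card \<Gamma> \<le> card (Pow I)"
      using I by (auto intro: psubset_card_mono card_mono finite_subset[of _ "Pow I"])
    then show "card (Pow I) - card \<Gamma> < card (Pow I) - card Z" by linarith
  qed
  from bij_betw_trans[OF lower upper] show ?thesis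
    by (rule bij_betw_cong[THEN iffD2, rotated]) (simp add: theta_eq_zeta[OF I])
qed

theorem theta_species_iso: "species_iso kSC (lin_dual kSC) theta"
  unfolding species_iso_def lin_iso_def
  using bij_betw_theta theta_relab linear_on_linext[OF pairing_in_fspace]
  by (auto simp: theta_def)

theorem theta_monoid_morph: "monoid_morph kSC (lin_dual kSC) theta"
  by (simp add: monoid_morph_def theta_mult theta_munit)

theorem theta_comonoid_morph: "comonoid_morph kSC (lin_dual kSC) theta"
  by (simp add: comonoid_morph_def theta_comult theta_ccounit)

section \<open>Connected components\<close>

lemma partition_on_Un:
  assumes "partition_on A P" "partition_on B Q" "A \<inter> B = {}"
  shows "partition_on (A \<union> B) (P \<union> Q)"
proof -
  have "disjoint (P \<union> Q)" using assms by (intro disjoint_union) (simp_all add: partition_on_def)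
  then show ?thesis using assms by (simp add: partition_on_def)
qed

definition separates :: "'a set \<Rightarrow> 'a set set \<Rightarrow> 'a set \<Rightarrow> bool" where
  "separates I \<Gamma> A \<longleftrightarrow> A \<subseteq> I \<and> (\<forall>F\<in>\<Gamma>. F \<subseteq> A \<or> F \<subseteq> I - A)"

definition component :: "'a set \<Rightarrow> 'a set set \<Rightarrow> 'a \<Rightarrow> 'a set" where
  "component I \<Gamma> i = \<Inter>{A. separates I \<Gamma> A \<and> i \<in> A}"

definition components :: "'a set \<Rightarrow> 'a set set \<Rightarrow> 'a set set" where
  "components I \<Gamma> = component I \<Gamma> ` I"

definition is_connected :: "'a set \<Rightarrow> 'a set set \<Rightarrow> bool" where
  "is_connected A \<Gamma> \<longleftrightarrow> \<Gamma> \<in> SC A \<and> A \<noteq> {} \<and> (\<forall>S. separates A \<Gamma> S \<longrightarrow> S = {} \<or> S = A)"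

lemma separates_ground: "\<Gamma> \<subseteq> Pow I \<Longrightarrow> separates I \<Gamma> I"
  by (auto simp: separates_def)

lemma separates_Diff: "separates I \<Gamma> A \<Longrightarrow> separates I \<Gamma> (I - A)"
  unfolding separates_def by auto

lemma separates_Inter:
  assumes "\<A> \<noteq> {}" "\<And>A. A \<in> \<A> \<Longrightarrow> separates I \<Gamma> A"
  shows "separates I \<Gamma> (\<Inter>\<A>)"
  unfolding separates_def
proof (intro conjI ballI)
  show "\<Inter>\<A> \<subseteq> I" using assms by (auto simp: separates_def)
  fix F assume F: "F \<in> \<Gamma>"
  show "F \<subseteq> \<Inter>\<A> \<or> F \<subseteq> I - \<Inter>\<A>"
  proof (cases "\<forall>A\<in>\<A>. F \<subseteq> A")
    case False
    then obtain A where A: "A \<in> \<A>" "\<not> F \<subseteq> A" by auto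
    then have "F \<subseteq> I - A" using assms(2)[OF A(1)] F by (auto simp: separates_def)
    then show ?thesis using A(1) by auto
  qed auto
qed

lemma separates_Int_Pow:
  assumes "separates I \<Gamma> S" "A \<subseteq> I"
  shows "separates A (\<Gamma> \<inter> Pow A) (S \<inter> A)"
  using assms unfolding separates_def by auto

lemma component_least: "separates I \<Gamma> A \<Longrightarrow> i \<in> A \<Longrightarrow> component I \<Gamma> i \<subseteq> A"
  unfolding component_def by auto

lemma
  assumes "\<Gamma> \<subseteq> Pow I" "i \<in> I"
  shows mem_component: "i \<in> component I \<Gamma> i"
    and separates_component: "separates I \<Gamma> (component I \<Gamma> i)"
    and component_subset: "component I \<Gamma> i \<subseteq> I"
proof -
  have "{A. separates I \<Gamma> A \<and> i \<in> A} \<noteq> {}" using separates_ground[OF assms(1)] assms(2) by auto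
  then show sep: "separates I \<Gamma> (component I \<Gamma> i)"
    unfolding component_def by (rule separates_Inter) auto
  then show "component I \<Gamma> i \<subseteq> I" by (simp add: separates_def)
  show "i \<in> component I \<Gamma> i" by (auto simp: component_def)
qed

lemma component_eq:
  assumes \<Gamma>: "\<Gamma> \<subseteq> Pow I" and i: "i \<in> I" and j: "j \<in> component I \<Gamma> i"
  shows "component I \<Gamma> j = component I \<Gamma> i"
proof
  have jI: "j \<in> I" using component_subset[OF \<Gamma> i] j by auto
  show "component I \<Gamma> j \<subseteq> component I \<Gamma> i"
    by (rule component_least[OF separates_component[OF \<Gamma> i] j])
  have "i \<notin> I - component I \<Gamma> j"
  proof
    assume "i \<in> I - component I \<Gamma> j"
    then have "component I \<Gamma> i \<subseteq> I - component I \<Gamma> j"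
      by (rule component_least[OF separates_Diff[OF separates_component[OF \<Gamma> jI]]])
    then show False using j mem_component[OF \<Gamma> jI] by auto
  qed
  then show "component I \<Gamma> i \<subseteq> component I \<Gamma> j"
    using i by (intro component_least[OF separates_component[OF \<Gamma> jI]]) auto
qed

lemma partition_on_components:
  assumes \<Gamma>: "\<Gamma> \<subseteq> Pow I"
  shows "partition_on I (components I \<Gamma>)"
proof (rule partition_onI)
  show "\<Union>(components I \<Gamma>) = I"
    using mem_component[OF \<Gamma>] component_subset[OF \<Gamma>] by (auto simp: components_def)
  show "{} \<notin> components I \<Gamma>"
    using mem_component[OF \<Gamma>] by (force simp: components_def)
  fix A B assume A: "A \<in> components I \<Gamma>" and B: "B \<in> components I \<Gamma>" and "A \<noteq> B"
  obtain i j where ij: "i \<in> I" "A = component I \<Gamma> i" "j \<in> I" "B = component I \<Gamma> j"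
    using A B by (auto simp: components_def)
  show "disjnt A B"
  proof (rule ccontr)
    assume "\<not> disjnt A B"
    then obtain x where "x \<in> A" "x \<in> B" by (auto simp: disjnt_def)
    then have "component I \<Gamma> x = A" "component I \<Gamma> x = B"
      using component_eq[OF \<Gamma> ij(1), of x] component_eq[OF \<Gamma> ij(3), of x] ij(2,4) by simp_all
    then show False using \<open>A \<noteq> B\<close> by simp
  qed
qed

lemma component_in_components: "i \<in> I \<Longrightarrow> component I \<Gamma> i \<in> components I \<Gamma>"
  by (simp add: components_def)

lemma components_SC:
  assumes "\<Gamma> \<in> SC I" "A \<in> components I \<Gamma>"
  shows "A \<subseteq> I" "A \<noteq> {}"
  using partition_on_components[of \<Gamma> I] assms by (auto simp: SC_def partition_on_def)

lemma face_subset_component: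
  assumes "F \<in> \<Gamma>" "i \<in> F"
  shows "F \<subseteq> component I \<Gamma> i"
  unfolding component_def
proof (rule Inter_greatest)
  fix A assume "A \<in> {A. separates I \<Gamma> A \<and> i \<in> A}"
  then have "F \<subseteq> A \<or> F \<subseteq> I - A" "i \<in> A" using assms(1) by (auto simp: separates_def)
  then show "F \<subseteq> A" using assms(2) by auto
qed

lemma face_in_component:
  assumes \<Gamma>: "\<Gamma> \<in> SC I" and F: "F \<in> \<Gamma>" "F \<noteq> {}"
  obtains A where "A \<in> components I \<Gamma>" "F \<subseteq> A"
proof -
  obtain i where "i \<in> F" using F(2) by auto
  moreover have "i \<in> I" using \<Gamma> F(1) \<open>i \<in> F\<close> by (auto simp: SC_def)
  ultimately show ?thesis
    using that[OF component_in_components face_subset_component[OF F(1)]] by simp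
qed

lemma complex_eq_Union_components:
  assumes \<Gamma>: "\<Gamma> \<in> SC I"
  shows "\<Gamma> = insert {} (\<Union>A\<in>components I \<Gamma>. \<Gamma> \<inter> Pow A)"
proof
  show "\<Gamma> \<subseteq> insert {} (\<Union>A\<in>components I \<Gamma>. \<Gamma> \<inter> Pow A)"
  proof
    fix F assume F: "F \<in> \<Gamma>"
    show "F \<in> insert {} (\<Union>A\<in>components I \<Gamma>. \<Gamma> \<inter> Pow A)"
    proof (cases "F = {}")
      case False
      then obtain A where "A \<in> components I \<Gamma>" "F \<subseteq> A" using face_in_component[OF \<Gamma> F] by blast
      then show ?thesis using F by auto
    qed simp
  qed
  show "insert {} (\<Union>A\<in>components I \<Gamma>. \<Gamma> \<inter> Pow A) \<subseteq> \<Gamma>"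
    using \<Gamma> by (auto simp: SC_def)
qed

lemma is_connected_component:
  assumes \<Gamma>: "\<Gamma> \<in> SC I" and A: "A \<in> components I \<Gamma>"
  shows "is_connected A (\<Gamma> \<inter> Pow A)"
  unfolding is_connected_def
proof (intro conjI allI impI)
  have \<Gamma>I: "\<Gamma> \<subseteq> Pow I" using \<Gamma> by (simp add: SC_def)
  obtain i where i: "i \<in> I" "A = component I \<Gamma> i" using A by (auto simp: components_def)
  have iA: "i \<in> A" and AI: "A \<subseteq> I" and sepA: "separates I \<Gamma> A"
    using mem_component[OF \<Gamma>I i(1)] component_subset[OF \<Gamma>I i(1)] separates_component[OF \<Gamma>I i(1)] i(2)
    by auto
  show "\<Gamma> \<inter> Pow A \<in> SC A" by (rule Int_Pow_in_SC[OF \<Gamma>])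
  show "A \<noteq> {}" using iA by auto
  fix S assume S: "separates A (\<Gamma> \<inter> Pow A) S"
  have "separates I \<Gamma> S"
    unfolding separates_def
  proof (intro conjI ballI)
    show "S \<subseteq> I" using S AI by (auto simp: separates_def)
    fix F assume F: "F \<in> \<Gamma>"
    show "F \<subseteq> S \<or> F \<subseteq> I - S"
    proof (cases "F \<subseteq> A")
      case True
      then have "F \<subseteq> S \<or> F \<subseteq> A - S" using S F by (auto simp: separates_def)
      then show ?thesis using AI by auto
    next
      case False
      then have "F \<subseteq> I - A" using sepA F by (auto simp: separates_def)
      then show ?thesis using S by (auto simp: separates_def)
    qed
  qed
  then have "A \<subseteq> S \<or> A \<subseteq> I - S"
    using component_least[of I \<Gamma> S i] component_least[OF separates_Diff, of I \<Gamma> S i] i(1) i(2)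
    by (cases "i \<in> S") auto
  then show "S = {} \<or> S = A" using S by (auto simp: separates_def)
qed

locale gluing =
  fixes I :: "'a set" and K :: "'i set" and A :: "'i \<Rightarrow> 'a set" and Z :: "'i \<Rightarrow> 'a set set"
  assumes inj_A: "inj_on A K" and partition_A: "partition_on I (A ` K)"
    and connected_Z: "\<And>k. k \<in> K \<Longrightarrow> is_connected (A k) (Z k)"
begin

definition glued :: "'a set set" where
  "glued = insert {} (\<Union>k\<in>K. Z k)"

lemma A_subset: "k \<in> K \<Longrightarrow> A k \<subseteq> I"
  using partition_A by (auto simp: partition_on_def)

lemma Z_in_SC: "k \<in> K \<Longrightarrow> Z k \<in> SC (A k)"
  using connected_Z by (simp add: is_connected_def)

lemma A_disjoint:
  assumes "k \<in> K" "k' \<in> K" "k \<noteq> k'"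
  shows "A k \<inter> A k' = {}"
proof -
  have "A k \<noteq> A k'" using inj_A assms by (auto simp: inj_on_def)
  then show ?thesis using partition_A assms by (auto simp: partition_on_def pairwise_def disjnt_def)
qed

lemma glued_cases:
  assumes "F \<in> glued"
  obtains "F = {}" | k where "k \<in> K" "F \<in> Z k"
  using assms by (auto simp: glued_def)

lemma face_subset_A:
  assumes "k \<in> K" "F \<in> Z k"
  shows "F \<subseteq> A k"
  using Z_in_SC[OF assms(1)] assms(2) by (auto simp: SC_def)

lemma glued_in_SC: "glued \<in> SC I"
  unfolding SC_def
proof (intro CollectI conjI ballI allI impI)
  show "glued \<subseteq> Pow I"
  proof
    fix X assume "X \<in> glued"
    then show "X \<in> Pow I"
      by (cases rule: glued_cases) (use face_subset_A A_subset in fastforce)+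
  qed
  show "{} \<in> glued" by (simp add: glued_def)
  fix X Y assume "X \<in> glued" and Y: "Y \<subseteq> X"
  then show "Y \<in> glued"
  proof (cases rule: glued_cases)
    case 1
    then show ?thesis using Y by (simp add: glued_def)
  next
    case (2 k)
    then have "Y \<in> Z k" using Z_in_SC[OF 2(1)] Y by (simp add: SC_def)
    then show ?thesis using 2(1) by (auto simp: glued_def)
  qed
qed

lemma glued_Int_Pow:
  assumes k: "k \<in> K"
  shows "glued \<inter> Pow (A k) = Z k"
proof
  show "Z k \<subseteq> glued \<inter> Pow (A k)" using k face_subset_A by (auto simp: glued_def)
  show "glued \<inter> Pow (A k) \<subseteq> Z k"
  proof
    fix X assume X: "X \<in> glued \<inter> Pow (A k)"
    have "{} \<in> Z k" using Z_in_SC[OF k] by (simp add: SC_def)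
    moreover have "X \<in> Z k" if "k' \<in> K" "X \<in> Z k'" for k'
    proof (cases "k' = k")
      case False
      then have "X = {}" using X face_subset_A[OF that] A_disjoint[OF k that(1)] by auto
      then show ?thesis using \<open>{} \<in> Z k\<close> by simp
    qed (use that in simp)
    ultimately show "X \<in> Z k" using X by (metis IntD1 glued_cases)
  qed
qed

lemma separates_A:
  assumes k: "k \<in> K"
  shows "separates I glued (A k)"
  unfolding separates_def
proof (intro conjI ballI)
  fix F assume "F \<in> glued"
  then show "F \<subseteq> A k \<or> F \<subseteq> I - A k"
  proof (cases rule: glued_cases)
    case (2 k')
    show ?thesis
    proof (cases "k' = k")
      case False
      then have "F \<subseteq> A k'" "A k' \<subseteq> I" "A k \<inter> A k' = {}"
        using face_subset_A[OF 2] A_subset[OF 2(1)] A_disjoint[OF k 2(1)] by auto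
      then show ?thesis by auto
    qed (use face_subset_A[OF 2] in simp)
  qed simp
qed (rule A_subset[OF k])

lemma component_glued:
  assumes k: "k \<in> K" and i: "i \<in> A k"
  shows "component I glued i = A k"
proof
  have \<Gamma>: "glued \<subseteq> Pow I" and iI: "i \<in> I" using glued_in_SC A_subset[OF k] i by (auto simp: SC_def)
  show "component I glued i \<subseteq> A k" by (rule component_least[OF separates_A[OF k] i])
  have "separates (A k) (Z k) (component I glued i \<inter> A k)"
    using separates_Int_Pow[OF separates_component[OF \<Gamma> iI] A_subset[OF k]] glued_Int_Pow[OF k] by simp
  then have "component I glued i \<inter> A k = {} \<or> component I glued i \<inter> A k = A k"
    using connected_Z[OF k] by (simp add: is_connected_def)
  then show "A k \<subseteq> component I glued i" using mem_component[OF \<Gamma> iI] i by auto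
qed

lemma components_glued: "components I glued = A ` K"
proof
  have \<Gamma>: "glued \<subseteq> Pow I" using glued_in_SC by (simp add: SC_def)
  show "components I glued \<subseteq> A ` K"
  proof
    fix B assume "B \<in> components I glued"
    then obtain i where i: "i \<in> I" "B = component I glued i" by (auto simp: components_def)
    then obtain k where "k \<in> K" "i \<in> A k" using partition_A by (auto simp: partition_on_def)
    then show "B \<in> A ` K" using component_glued i(2) by auto
  qed
  show "A ` K \<subseteq> components I glued"
  proof
    fix B assume "B \<in> A ` K"
    then obtain k where k: "k \<in> K" "B = A k" by auto
    then obtain i where i: "i \<in> A k" using partition_A by (auto simp: partition_on_def)
    then have "component I glued i \<in> components I glued"
      using A_subset[OF k(1)] by (intro component_in_components) auto
    then show "B \<in> components I glued" using component_glued[OF k(1) i] k(2) by simp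
  qed
qed

end

lemma separates_relabel_iff:
  assumes \<sigma>: "bij_betw \<sigma> A B" and \<Gamma>: "\<Gamma> \<subseteq> Pow A" and S: "S \<subseteq> A"
  shows "separates B (relabel \<sigma> \<Gamma>) (\<sigma> ` S) \<longleftrightarrow> separates A \<Gamma> S"
proof -
  have inj: "inj_on \<sigma> A" and img: "\<sigma> ` A = B" using \<sigma> by (auto simp: bij_betw_def)
  have diff: "B - \<sigma> ` S = \<sigma> ` (A - S)" using inj img S by (simp add: inj_on_image_set_diff)
  have sub: "\<sigma> ` F \<subseteq> \<sigma> ` X \<longleftrightarrow> F \<subseteq> X" if "F \<subseteq> A" "X \<subseteq> A" for F X
  proof (intro iffI subsetI)
    fix t assume "\<sigma> ` F \<subseteq> \<sigma> ` X" "t \<in> F"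
    then have "\<sigma> t \<in> \<sigma> ` X" by auto
    then show "t \<in> X" using inj_on_image_mem_iff[OF inj, of t X] that \<open>t \<in> F\<close> by auto
  qed auto
  have "\<sigma> ` F \<subseteq> \<sigma> ` S \<longleftrightarrow> F \<subseteq> S" "\<sigma> ` F \<subseteq> B - \<sigma> ` S \<longleftrightarrow> F \<subseteq> A - S" if "F \<in> \<Gamma>" for F
    using that \<Gamma> S by (auto simp: diff intro!: sub)
  then show ?thesis using S img unfolding separates_def relabel_def by auto
qed

lemma is_connected_relabel:
  assumes \<sigma>: "bij_betw \<sigma> A B" and \<Gamma>: "is_connected A \<Gamma>"
  shows "is_connected B (relabel \<sigma> \<Gamma>)"
  unfolding is_connected_def
proof (intro conjI allI impI)
  have \<Gamma>A: "\<Gamma> \<in> SC A" "A \<noteq> {}" using \<Gamma> by (auto simp: is_connected_def)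
  have img: "\<sigma> ` A = B" using \<sigma> by (simp add: bij_betw_def)
  show "relabel \<sigma> \<Gamma> \<in> SC B" by (rule relabel_SC[OF \<sigma> \<Gamma>A(1)])
  show "B \<noteq> {}" using \<Gamma>A(2) img by auto
  fix S' assume S': "separates B (relabel \<sigma> \<Gamma>) S'"
  define S where "S = inv_into A \<sigma> ` S'"
  have "S' \<subseteq> B" using S' by (simp add: separates_def)
  then have SA: "S \<subseteq> A" and S'S: "S' = \<sigma> ` S"
    using img by (auto simp: S_def inv_into_into image_inv_into_cancel)
  have "separates A \<Gamma> S"
    using S' \<Gamma>A(1) SA separates_relabel_iff[OF \<sigma>] by (simp add: S'S SC_def)
  then have "S = {} \<or> S = A" using \<Gamma> by (simp add: is_connected_def)
  then show "S' = {} \<or> S' = B" using S'S img by auto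
qed

definition connected_complexes :: "'a set \<Rightarrow> 'a set set set" where
  "connected_complexes A = {\<Gamma>. is_connected A \<Gamma>}"

lemma finite_connected_complexes: "finite A \<Longrightarrow> finite (connected_complexes A)"
  by (rule finite_subset[OF _ finite_SC[of A]]) (auto simp: connected_complexes_def is_connected_def)

text \<open>Set species take values in sets of naturals, so q[A] is the initial segment of \<nat>
  enumerating the connected complexes on A, in an order fixed once and for all by choice.\<close>
definition qconn :: "'a set \<Rightarrow> nat set" where
  "qconn A = {0..<card (connected_complexes A)}"

definition decode :: "'a set \<Rightarrow> nat \<Rightarrow> 'a set set" where
  "decode A = (SOME h. bij_betw h (qconn A) (connected_complexes A))"

definition encode :: "'a set \<Rightarrow> 'a set set \<Rightarrow> nat" where
  "encode A = inv_into (qconn A) (decode A)"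

definition qconn_act :: "('a \<Rightarrow> 'a) \<Rightarrow> 'a set \<Rightarrow> nat \<Rightarrow> nat" where
  "qconn_act \<sigma> A x = encode (\<sigma> ` A) (relabel \<sigma> (decode A x))"

lemma bij_betw_decode:
  assumes "finite A"
  shows "bij_betw (decode A) (qconn A) (connected_complexes A)"
proof -
  obtain h where "bij_betw h (qconn A) (connected_complexes A)"
    using ex_bij_betw_nat_finite[OF finite_connected_complexes[OF assms]] by (auto simp: qconn_def)
  then show ?thesis
    unfolding decode_def by (rule someI[of "\<lambda>h. bij_betw h (qconn A) (connected_complexes A)"])
qed

lemma encode_decode: "finite A \<Longrightarrow> x \<in> qconn A \<Longrightarrow> encode A (decode A x) = x"
  unfolding encode_def by (rule bij_betw_inv_into_left[OF bij_betw_decode])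

lemma decode_encode: "finite A \<Longrightarrow> is_connected A \<Gamma> \<Longrightarrow> decode A (encode A \<Gamma>) = \<Gamma>"
  unfolding encode_def
  by (rule bij_betw_inv_into_right[OF bij_betw_decode]) (simp_all add: connected_complexes_def)

lemma encode_in_qconn:
  assumes "finite A" "is_connected A \<Gamma>"
  shows "encode A \<Gamma> \<in> qconn A"
  using bij_betwE[OF bij_betw_inv_into[OF bij_betw_decode[OF assms(1)]]] assms(2)
  by (simp add: encode_def connected_complexes_def)

lemma is_connected_decode:
  assumes "finite A" "x \<in> qconn A"
  shows "is_connected A (decode A x)"
  using bij_betwE[OF bij_betw_decode[OF assms(1)]] assms(2) by (simp add: connected_complexes_def)

lemma qconn_empty: "qconn {} = {}"
proof -
  have empty: "connected_complexes {} = {}" by (auto simp: connected_complexes_def is_connected_def)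
  show ?thesis unfolding qconn_def empty by simp
qed

lemma set_species_qconn: "set_species qconn qconn_act"
  unfolding set_species_def
proof (intro conjI allI impI)
  fix A B :: "'a set" and \<sigma> :: "'a \<Rightarrow> 'a" and x
  assume A: "finite A" and \<sigma>: "bij_betw \<sigma> A B" and x: "x \<in> qconn A"
  have "is_connected B (relabel \<sigma> (decode A x))"
    by (rule is_connected_relabel[OF \<sigma> is_connected_decode[OF A x]])
  moreover have "finite B" "\<sigma> ` A = B" using \<sigma> A bij_betw_finite by (auto simp: bij_betw_def)
  ultimately show "qconn_act \<sigma> A x \<in> qconn B" by (simp add: qconn_act_def encode_in_qconn)
next
  fix A :: "'a set" and \<sigma> :: "'a \<Rightarrow> 'a" and x
  assume A: "finite A" and \<sigma>: "\<forall>a\<in>A. \<sigma> a = a" and x: "x \<in> qconn A"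
  have "decode A x \<subseteq> Pow A" using is_connected_decode[OF A x] by (simp add: is_connected_def SC_def)
  then have "relabel \<sigma> (decode A x) = decode A x" using \<sigma> by (intro relabel_ident[of A]) auto
  moreover have "\<sigma> ` A = A" using \<sigma> by simp
  ultimately show "qconn_act \<sigma> A x = x" by (simp add: qconn_act_def encode_decode[OF A x])
next
  fix A :: "'a set" and \<sigma> \<tau> :: "'a \<Rightarrow> 'a" and x
  assume A: "finite A" and \<sigma>\<tau>: "\<forall>a\<in>A. \<sigma> a = \<tau> a" and x: "x \<in> qconn A"
  have "decode A x \<subseteq> Pow A" using is_connected_decode[OF A x] by (simp add: is_connected_def SC_def)
  then have "relabel \<sigma> (decode A x) = relabel \<tau> (decode A x)" using \<sigma>\<tau> by (intro relabel_cong[of A]) auto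
  moreover have "\<sigma> ` A = \<tau> ` A" using \<sigma>\<tau> by (simp cong: image_cong)
  ultimately show "qconn_act \<sigma> A x = qconn_act \<tau> A x" by (simp add: qconn_act_def)
next
  fix A B :: "'a set" and \<sigma> \<tau> :: "'a \<Rightarrow> 'a" and x
  assume A: "finite A" and \<sigma>: "bij_betw \<sigma> A B" and x: "x \<in> qconn A"
  have B: "finite B" "\<sigma> ` A = B" using \<sigma> A bij_betw_finite by (auto simp: bij_betw_def)
  have "is_connected B (relabel \<sigma> (decode A x))"
    by (rule is_connected_relabel[OF \<sigma> is_connected_decode[OF A x]])
  then have "qconn_act \<tau> B (qconn_act \<sigma> A x) = encode (\<tau> ` B) (relabel \<tau> (relabel \<sigma> (decode A x)))"
    using B by (simp add: qconn_act_def decode_encode)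
  also have "\<dots> = qconn_act (\<tau> \<circ> \<sigma>) A x"
    using B(2) image_image[of \<tau> \<sigma> A] by (simp add: qconn_act_def relabel_comp)
  finally show "qconn_act (\<tau> \<circ> \<sigma>) A x = qconn_act \<tau> B (qconn_act \<sigma> A x)" by simp
qed

section \<open>Decomposition into connected components\<close>

definition decomp :: "'a set \<Rightarrow> 'a set set \<Rightarrow> ('a set \<times> nat) set" where
  "decomp I \<Gamma> = (\<lambda>A. (A, encode A (\<Gamma> \<inter> Pow A))) ` components I \<Gamma>"

lemma fst_decomp: "fst ` decomp I \<Gamma> = components I \<Gamma>"
  by (simp add: decomp_def image_image)

lemma (in gluing) decomp_glued: "decomp I glued = (\<lambda>k. (A k, encode (A k) (Z k))) ` K"
  unfolding decomp_def components_glued image_image using glued_Int_Pow by (intro image_cong) auto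

lemma decomp_in_Sq_basis:
  assumes I: "finite I" and \<Gamma>: "\<Gamma> \<in> SC I"
  shows "decomp I \<Gamma> \<in> Sq_basis qconn I"
  unfolding Sq_basis_def
proof (intro CollectI conjI ballI)
  show "partition_on I (fst ` decomp I \<Gamma>)"
    using partition_on_components[of \<Gamma> I] \<Gamma> by (simp add: fst_decomp SC_def)
  show "inj_on fst (decomp I \<Gamma>)" by (auto simp: decomp_def inj_on_def)
  fix p assume "p \<in> decomp I \<Gamma>"
  then obtain A where A: "A \<in> components I \<Gamma>" "p = (A, encode A (\<Gamma> \<inter> Pow A))" by (auto simp: decomp_def)
  have "finite A" using components_SC(1)[OF \<Gamma> A(1)] I by (rule finite_subset)
  then show "snd p \<in> qconn (fst p)" using A encode_in_qconn is_connected_component[OF \<Gamma> A(1)] by simp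
qed

lemma glue_decomp:
  assumes I: "finite I" and \<Gamma>: "\<Gamma> \<in> SC I"
  shows "insert {} (\<Union>p\<in>decomp I \<Gamma>. decode (fst p) (snd p)) = \<Gamma>"
proof -
  have "decode A (encode A (\<Gamma> \<inter> Pow A)) = \<Gamma> \<inter> Pow A" if A: "A \<in> components I \<Gamma>" for A
    using components_SC(1)[OF \<Gamma> A] I is_connected_component[OF \<Gamma> A]
    by (intro decode_encode) (auto intro: finite_subset)
  then show ?thesis using complex_eq_Union_components[OF \<Gamma>] by (simp add: decomp_def)
qed

lemma bij_betw_decomp:
  assumes I: "finite I"
  shows "bij_betw (decomp I) (SC I) (Sq_basis qconn I)"
proof (rule bij_betw_imageI)
  show "inj_on (decomp I) (SC I)"
  proof (rule inj_onI)
    fix \<Gamma> \<Delta> assume "\<Gamma> \<in> SC I" "\<Delta> \<in> SC I" "decomp I \<Gamma> = decomp I \<Delta>"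
    then show "\<Gamma> = \<Delta>" using glue_decomp[OF I] by metis
  qed
  show "decomp I ` SC I = Sq_basis qconn I"
  proof
    show "decomp I ` SC I \<subseteq> Sq_basis qconn I" using decomp_in_Sq_basis[OF I] by blast
    show "Sq_basis qconn I \<subseteq> decomp I ` SC I"
    proof
      fix X assume X: "X \<in> Sq_basis qconn I"
      then have P: "partition_on I (fst ` X)" and inj: "inj_on fst X"
        and q: "\<And>p. p \<in> X \<Longrightarrow> snd p \<in> qconn (fst p)"
        by (auto simp: Sq_basis_def)
      have fin: "finite (fst p)" if "p \<in> X" for p
        using P that I by (auto simp: partition_on_def intro: finite_subset)
      interpret gluing I X fst "\<lambda>p. decode (fst p) (snd p)"
        using P inj q fin by unfold_locales (simp_all add: is_connected_decode)
      have "decomp I glued = (\<lambda>p. (fst p, snd p)) ` X"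
        unfolding decomp_glued using q fin by (intro image_cong) (simp_all add: encode_decode)
      then have "decomp I glued = X" by simp
      then show "X \<in> decomp I ` SC I" using glued_in_SC by blast
    qed
  qed
qed

lemma Un_Int_Pow_subset:
  assumes "S \<inter> T = {}" "\<Gamma>1 \<in> SC S" "\<Gamma>2 \<in> SC T" "B \<subseteq> S"
  shows "(\<Gamma>1 \<union> \<Gamma>2) \<inter> Pow B = \<Gamma>1 \<inter> Pow B"
proof -
  have "(\<Gamma>1 \<union> \<Gamma>2) \<inter> Pow B = (\<Gamma>1 \<union> \<Gamma>2) \<inter> Pow S \<inter> Pow B" using assms(4) by auto
  then show ?thesis using SC_Un_Int_Pow(1)[OF assms(1-3)] by simp
qed

lemma decomp_Un:
  assumes ST: "S \<inter> T = {}" and \<Gamma>1: "\<Gamma>1 \<in> SC S" and \<Gamma>2: "\<Gamma>2 \<in> SC T"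
  shows "decomp (S \<union> T) (\<Gamma>1 \<union> \<Gamma>2) = decomp S \<Gamma>1 \<union> decomp T \<Gamma>2"
proof -
  let ?K = "components S \<Gamma>1 \<union> components T \<Gamma>2"
  define Z where "Z B = (\<Gamma>1 \<union> \<Gamma>2) \<inter> Pow B" for B
  have Z1: "Z B = \<Gamma>1 \<inter> Pow B" if "B \<in> components S \<Gamma>1" for B
    using Un_Int_Pow_subset[OF ST \<Gamma>1 \<Gamma>2 components_SC(1)[OF \<Gamma>1 that]] by (simp add: Z_def)
  have Z2: "Z B = \<Gamma>2 \<inter> Pow B" if "B \<in> components T \<Gamma>2" for B
    using Un_Int_Pow_subset[of T S \<Gamma>2 \<Gamma>1 B] ST \<Gamma>1 \<Gamma>2 components_SC(1)[OF \<Gamma>2 that]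
    by (simp add: Z_def Un_commute Int_commute)
  interpret gluing "S \<union> T" ?K id Z
  proof
    show "inj_on id ?K" by simp
    show "partition_on (S \<union> T) (id ` ?K)"
      using partition_on_Un[OF partition_on_components partition_on_components ST] \<Gamma>1 \<Gamma>2
      by (simp add: SC_def)
    show "is_connected (id B) (Z B)" if "B \<in> ?K" for B
      using that Z1 Z2 is_connected_component[OF \<Gamma>1] is_connected_component[OF \<Gamma>2] by auto
  qed
  have "(\<Union>B\<in>?K. Z B) = (\<Union>B\<in>components S \<Gamma>1. \<Gamma>1 \<inter> Pow B) \<union> (\<Union>B\<in>components T \<Gamma>2. \<Gamma>2 \<inter> Pow B)"
    using Z1 Z2 by simp
  then have "glued = \<Gamma>1 \<union> \<Gamma>2"
    using complex_eq_Union_components[OF \<Gamma>1] complex_eq_Union_components[OF \<Gamma>2] by (auto simp: glued_def)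
  then have "decomp (S \<union> T) (\<Gamma>1 \<union> \<Gamma>2) = (\<lambda>B. (B, encode B (Z B))) ` ?K"
    using decomp_glued by simp
  also have "\<dots> = decomp S \<Gamma>1 \<union> decomp T \<Gamma>2"
    unfolding decomp_def image_Un using Z1 Z2 by (intro arg_cong2[where f = "(\<union>)"] image_cong) auto
  finally show ?thesis .
qed

lemma decomp_relabel:
  assumes I: "finite I" and \<sigma>: "bij_betw \<sigma> I J" and \<Gamma>: "\<Gamma> \<in> SC I"
  shows "decomp J (relabel \<sigma> \<Gamma>) = (\<lambda>p. (\<sigma> ` fst p, qconn_act \<sigma> (fst p) (snd p))) ` decomp I \<Gamma>"
proof -
  let ?K = "components I \<Gamma>"
  have inj: "inj_on \<sigma> I" and img: "\<sigma> ` I = J" using \<sigma> by (auto simp: bij_betw_def)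
  have P: "partition_on I ?K" using partition_on_components[of \<Gamma> I] \<Gamma> by (simp add: SC_def)
  have sub: "B \<subseteq> I" if "B \<in> ?K" for B using components_SC(1)[OF \<Gamma> that] .
  interpret gluing J ?K "\<lambda>B. \<sigma> ` B" "\<lambda>B. relabel \<sigma> (\<Gamma> \<inter> Pow B)"
  proof
    show "inj_on (\<lambda>B. \<sigma> ` B) ?K" using inj P by (intro inj_on_image) (simp add: partition_on_def)
    have "(\<lambda>B. \<sigma> ` B) ` ?K - {{}} = (\<lambda>B. \<sigma> ` B) ` ?K" using components_SC(2)[OF \<Gamma>] by auto
    then show "partition_on J ((\<lambda>B. \<sigma> ` B) ` ?K)" using partition_on_inj_image[OF P inj] img by simp
    show "is_connected (\<sigma> ` B) (relabel \<sigma> (\<Gamma> \<inter> Pow B))" if "B \<in> ?K" for B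
      using inj_on_subset[OF inj sub[OF that]]
      by (intro is_connected_relabel[OF _ is_connected_component[OF \<Gamma> that]]) (simp add: bij_betw_def)
  qed
  have act: "qconn_act \<sigma> B (encode B (\<Gamma> \<inter> Pow B)) = encode (\<sigma> ` B) (relabel \<sigma> (\<Gamma> \<inter> Pow B))"
    if B: "B \<in> ?K" for B
  proof -
    have "finite B" using sub[OF B] I by (rule finite_subset)
    then show ?thesis by (simp add: qconn_act_def decode_encode is_connected_component[OF \<Gamma> B])
  qed
  have "relabel \<sigma> \<Gamma> = relabel \<sigma> (insert {} (\<Union>B\<in>?K. \<Gamma> \<inter> Pow B))"
    by (rule arg_cong[OF complex_eq_Union_components[OF \<Gamma>]])
  also have "\<dots> = glued" unfolding glued_def by (simp only: relabel_def image_insert image_UN image_empty)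
  finally have "relabel \<sigma> \<Gamma> = glued" .
  then have "decomp J (relabel \<sigma> \<Gamma>) = (\<lambda>B. (\<sigma> ` B, encode (\<sigma> ` B) (relabel \<sigma> (\<Gamma> \<inter> Pow B)))) ` ?K"
    using decomp_glued by simp
  also have "\<dots> = (\<lambda>p. (\<sigma> ` fst p, qconn_act \<sigma> (fst p) (snd p))) ` decomp I \<Gamma>"
    unfolding decomp_def image_image using act by (intro image_cong) auto
  finally show ?thesis .
qed

lemma components_split_iff:
  assumes ST: "S \<inter> T = {}" and \<Delta>: "\<Delta> \<in> SC (S \<union> T)"
  shows "(\<forall>B\<in>components (S \<union> T) \<Delta>. B \<subseteq> S \<or> B \<subseteq> T) \<longleftrightarrow> \<Delta> = (\<Delta> \<inter> Pow S) \<union> (\<Delta> \<inter> Pow T)"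
proof
  assume split: "\<forall>B\<in>components (S \<union> T) \<Delta>. B \<subseteq> S \<or> B \<subseteq> T"
  show "\<Delta> = (\<Delta> \<inter> Pow S) \<union> (\<Delta> \<inter> Pow T)"
  proof
    show "\<Delta> \<subseteq> (\<Delta> \<inter> Pow S) \<union> (\<Delta> \<inter> Pow T)"
    proof
      fix F assume F: "F \<in> \<Delta>"
      show "F \<in> (\<Delta> \<inter> Pow S) \<union> (\<Delta> \<inter> Pow T)"
      proof (cases "F = {}")
        case False
        then obtain B where "B \<in> components (S \<union> T) \<Delta>" "F \<subseteq> B" using face_in_component[OF \<Delta> F] by blast
        then show ?thesis using split F by auto
      qed (use F in simp)
    qed
  qed auto
next
  assume split: "\<Delta> = (\<Delta> \<inter> Pow S) \<union> (\<Delta> \<inter> Pow T)"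
  have \<Delta>ST: "\<Delta> \<inter> Pow S \<in> SC S" "\<Delta> \<inter> Pow T \<in> SC T" using Int_Pow_in_SC[OF \<Delta>] by auto
  have "components (S \<union> T) \<Delta> = components S (\<Delta> \<inter> Pow S) \<union> components T (\<Delta> \<inter> Pow T)"
    using arg_cong[OF decomp_Un[OF ST \<Delta>ST], of "image fst"] split by (simp add: fst_decomp image_Un)
  then show "\<forall>B\<in>components (S \<union> T) \<Delta>. B \<subseteq> S \<or> B \<subseteq> T"
    using components_SC(1)[OF \<Delta>ST(1)] components_SC(1)[OF \<Delta>ST(2)] by auto
qed

lemma decomp_split:
  assumes ST: "S \<inter> T = {}" and \<Delta>: "\<Delta> \<in> SC (S \<union> T)" and split: "\<Delta> = (\<Delta> \<inter> Pow S) \<union> (\<Delta> \<inter> Pow T)"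
  shows "{r \<in> decomp (S \<union> T) \<Delta>. fst r \<subseteq> S} = decomp S (\<Delta> \<inter> Pow S)"
    and "{r \<in> decomp (S \<union> T) \<Delta>. fst r \<subseteq> T} = decomp T (\<Delta> \<inter> Pow T)"
proof -
  have \<Delta>ST: "\<Delta> \<inter> Pow S \<in> SC S" "\<Delta> \<inter> Pow T \<in> SC T" using Int_Pow_in_SC[OF \<Delta>] by auto
  have dec: "decomp (S \<union> T) \<Delta> = decomp S (\<Delta> \<inter> Pow S) \<union> decomp T (\<Delta> \<inter> Pow T)"
    using decomp_Un[OF ST \<Delta>ST] split by simp
  have "fst r \<subseteq> S \<and> fst r \<noteq> {}" if "r \<in> decomp S (\<Delta> \<inter> Pow S)" for r
    using that components_SC[OF \<Delta>ST(1)] fst_decomp by blast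
  moreover have "fst r \<subseteq> T \<and> fst r \<noteq> {}" if "r \<in> decomp T (\<Delta> \<inter> Pow T)" for r
    using that components_SC[OF \<Delta>ST(2)] fst_decomp by blast
  ultimately show "{r \<in> decomp (S \<union> T) \<Delta>. fst r \<subseteq> S} = decomp S (\<Delta> \<inter> Pow S)"
    and "{r \<in> decomp (S \<union> T) \<Delta>. fst r \<subseteq> T} = decomp T (\<Delta> \<inter> Pow T)"
    using ST unfolding dec by blast+
qed

section \<open>Free commutativity and free cocommutativity\<close>

lemma basis_Sq [simp]: "basis (Sq q qact) = Sq_basis q"
  by (simp add: Sq_def)

lemma act_Sq: "act (Sq q qact) \<sigma> I X = (\<lambda>p. (\<sigma> ` fst p, qact \<sigma> (fst p) (snd p))) ` X"
  by (simp add: Sq_def)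

lemma mult_Sq: "mult (Sq q qact) S T = linext (\<lambda>p. delta (fst p \<union> snd p))"
  by (rule ext) (simp add: Sq_def linrel_eq_linext delta_def)

lemma comult_Sq:
  "comult (Sq q qact) S T = linext (\<lambda>X. if \<forall>A\<in>fst ` X. A \<subseteq> S \<or> A \<subseteq> T
      then delta ({r \<in> X. fst r \<subseteq> S}, {r \<in> X. fst r \<subseteq> T}) else (\<lambda>p. 0))"
  by (rule ext) (simp add: Sq_def linrel_eq_linext, intro linext_cong ext, simp add: delta_def)

lemma munit_Sq: "munit (Sq q qact) = delta {}"
  and ccounit_Sq: "ccounit (Sq q qact) f = f {}"
  by (simp_all add: Sq_def)

lemma delta_restrictions:
  assumes ST: "S \<inter> T = {}" and \<Delta>: "\<Delta> \<in> SC (S \<union> T)"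
  shows "(if \<Delta> = (\<Delta> \<inter> Pow S) \<union> (\<Delta> \<inter> Pow T) then delta (\<Delta> \<inter> Pow S, \<Delta> \<inter> Pow T) else (\<lambda>p. 0)) p =
         (if p \<in> SC S \<times> SC T \<and> \<Delta> = fst p \<union> snd p then 1 else (0::'k::comm_ring_1))"
proof (cases "p \<in> SC S \<times> SC T \<and> \<Delta> = fst p \<union> snd p")
  case True
  then obtain \<Gamma>1 \<Gamma>2 where p: "p = (\<Gamma>1, \<Gamma>2)" "\<Gamma>1 \<in> SC S" "\<Gamma>2 \<in> SC T" "\<Delta> = \<Gamma>1 \<union> \<Gamma>2"
    by (cases p) auto
  then show ?thesis using SC_Un_Int_Pow[OF ST p(2,3)] by (simp add: delta_def)
next
  case False
  have "p \<noteq> (\<Delta> \<inter> Pow S, \<Delta> \<inter> Pow T)" if "\<Delta> = (\<Delta> \<inter> Pow S) \<union> (\<Delta> \<inter> Pow T)"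
    using False that Int_Pow_in_SC[OF \<Delta>] by auto
  then show ?thesis using False by (auto simp: delta_def)
qed

lemma comult_dual_kSC_eq_linext:
  assumes S: "finite S" and T: "finite T" and ST: "S \<inter> T = {}" and h: "h \<in> fspace (SC (S \<union> T))"
  shows "comult (lin_dual kSC) S T h = linext (\<lambda>\<Delta>. if \<Delta> = (\<Delta> \<inter> Pow S) \<union> (\<Delta> \<inter> Pow T)
      then delta (\<Delta> \<inter> Pow S, \<Delta> \<inter> Pow T) else (\<lambda>p. 0)) h"
proof
  fix p
  have "linext (\<lambda>\<Delta>. if \<Delta> = (\<Delta> \<inter> Pow S) \<union> (\<Delta> \<inter> Pow T) then delta (\<Delta> \<inter> Pow S, \<Delta> \<inter> Pow T) else (\<lambda>p. 0)) h p =
      (\<Sum>\<Delta>\<in>supp h. if \<Delta> = fst p \<union> snd p then (if p \<in> SC S \<times> SC T then h \<Delta> else 0) else 0)"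
    unfolding linext_def
  proof (rule sum.cong[OF refl])
    fix \<Delta> assume "\<Delta> \<in> supp h"
    then have "\<Delta> \<in> SC (S \<union> T)" using h by (auto simp: fspace_iff)
    then show "h \<Delta> * (if \<Delta> = (\<Delta> \<inter> Pow S) \<union> (\<Delta> \<inter> Pow T) then delta (\<Delta> \<inter> Pow S, \<Delta> \<inter> Pow T) else (\<lambda>p. 0)) p =
        (if \<Delta> = fst p \<union> snd p then (if p \<in> SC S \<times> SC T then h \<Delta> else 0) else 0)"
      by (simp add: delta_restrictions[OF ST])
  qed
  also have "\<dots> = comult (lin_dual kSC) S T h p"
    using h by (simp add: comult_dual_kSC[OF S T] sum.delta fspace_iff) (simp add: supp_def)
  finally show "comult (lin_dual kSC) S T h p = linext (\<lambda>\<Delta>. if \<Delta> = (\<Delta> \<inter> Pow S) \<union> (\<Delta> \<inter> Pow T)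
      then delta (\<Delta> \<inter> Pow S, \<Delta> \<inter> Pow T) else (\<lambda>p. 0)) h p" by simp
qed

definition phi :: "'a set \<Rightarrow> ('a set set \<Rightarrow> 'k::comm_ring_1) \<Rightarrow> ('a set \<times> nat) set \<Rightarrow> 'k" where
  "phi I = linext (\<lambda>\<Gamma>. delta (decomp I \<Gamma>))"

lemma phi_relab:
  assumes I: "finite I" and \<sigma>: "bij_betw \<sigma> I J" and f: "f \<in> fspace (SC I)"
  shows "phi J (relab kSC \<sigma> I f) = relab (Sq qconn qconn_act) \<sigma> I (phi I f)"
proof -
  have "phi J (relab kSC \<sigma> I f) = linext (\<lambda>\<Gamma>. delta (decomp J (relabel \<sigma> \<Gamma>))) f"
    unfolding phi_def relab_kSC using f by (simp add: linext_linext fspace_iff)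
  also have "\<dots> = linext (\<lambda>\<Gamma>. delta ((\<lambda>p. (\<sigma> ` fst p, qconn_act \<sigma> (fst p) (snd p))) ` decomp I \<Gamma>)) f"
    using f by (intro linext_cong) (auto simp: fspace_iff decomp_relabel[OF I \<sigma>])
  also have "\<dots> = relab (Sq qconn qconn_act) \<sigma> I (phi I f)"
    unfolding phi_def relab_eq_linext act_Sq using f by (simp add: linext_linext fspace_iff)
  finally show ?thesis .
qed

theorem phi_species_iso: "species_iso kSC (Sq qconn qconn_act) phi"
  unfolding species_iso_def lin_iso_def
proof (intro conjI allI impI)
  fix I :: "'a set" assume I: "finite I"
  show "linear_on (fspace (basis kSC I)) (fspace (basis (Sq qconn qconn_act) I)) (phi I)"
    unfolding phi_def using decomp_in_Sq_basis[OF I] by (auto intro!: linear_on_linext delta_in_fspace)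
  show "bij_betw (phi I) (fspace (basis kSC I)) (fspace (basis (Sq qconn qconn_act) I))"
    unfolding phi_def by (simp add: bij_betw_linext_delta[OF bij_betw_decomp[OF I]])
qed (simp add: phi_relab)

lemma phi_mult:
  assumes ST: "S \<inter> T = {}" and F: "F \<in> fspace (SC S \<times> SC T)"
  shows "phi (S \<union> T) (mult kSC S T F) = mult (Sq qconn qconn_act) S T (tensor_map (phi S) (phi T) F)"
proof -
  have "phi (S \<union> T) (mult kSC S T F) = linext (\<lambda>p. delta (decomp (S \<union> T) (fst p \<union> snd p))) F"
    unfolding phi_def mult_kSC using F by (simp add: linext_linext fspace_iff)
  also have "\<dots> = linext (\<lambda>p. delta (decomp S (fst p) \<union> decomp T (snd p))) F"
    using F by (intro linext_cong) (auto simp: fspace_iff decomp_Un[OF ST])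
  also have "\<dots> = mult (Sq qconn qconn_act) S T (tensor_map (phi S) (phi T) F)"
    unfolding phi_def mult_Sq tensor_map_linext_delta using F by (simp add: linext_linext fspace_iff)
  finally show ?thesis .
qed

lemma phi_munit: "phi {} (munit kSC) = munit (Sq qconn qconn_act)"
  by (simp add: phi_def munit_kSC munit_Sq decomp_def components_def)

theorem phi_monoid_morph: "monoid_morph kSC (Sq qconn qconn_act) phi"
  by (simp add: monoid_morph_def phi_mult phi_munit)

lemma comult_Sq_decomp:
  assumes ST: "S \<inter> T = {}" and \<Delta>: "\<Delta> \<in> SC (S \<union> T)"
  shows "(if \<forall>A\<in>fst ` decomp (S \<union> T) \<Delta>. A \<subseteq> S \<or> A \<subseteq> T
            then delta ({r \<in> decomp (S \<union> T) \<Delta>. fst r \<subseteq> S}, {r \<in> decomp (S \<union> T) \<Delta>. fst r \<subseteq> T})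
            else (\<lambda>p. 0)) =
         (if \<Delta> = (\<Delta> \<inter> Pow S) \<union> (\<Delta> \<inter> Pow T)
            then delta (decomp S (\<Delta> \<inter> Pow S), decomp T (\<Delta> \<inter> Pow T))
            else (\<lambda>p. 0 :: 'k::comm_ring_1))"
  unfolding fst_decomp components_split_iff[OF ST \<Delta>] using decomp_split[OF ST \<Delta>] by simp

lemma phi_comult:
  assumes S: "finite S" and T: "finite T" and ST: "S \<inter> T = {}" and f: "f \<in> fspace (SC (S \<union> T))"
  shows "comult (Sq qconn qconn_act) S T (phi (S \<union> T) f) =
         tensor_map (phi S) (phi T) (comult (lin_dual kSC) S T f)"
proof -
  let ?split = "\<lambda>\<Delta>. \<Delta> = (\<Delta> \<inter> Pow S) \<union> (\<Delta> \<inter> Pow T)"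
  have fin: "finite (supp f)" using f by (simp add: fspace_iff)
  have "comult (Sq qconn qconn_act) S T (phi (S \<union> T) f) =
      linext (\<lambda>\<Delta>. if ?split \<Delta> then delta (decomp S (\<Delta> \<inter> Pow S), decomp T (\<Delta> \<inter> Pow T)) else (\<lambda>p. 0)) f"
    unfolding phi_def comult_Sq linext_linext_delta[OF fin]
    using f by (intro linext_cong comult_Sq_decomp[OF ST]) (auto simp: fspace_iff)
  also have "\<dots> = tensor_map (phi S) (phi T) (comult (lin_dual kSC) S T f)"
    unfolding comult_dual_kSC_eq_linext[OF S T ST f] phi_def tensor_map_linext_delta using fin
    by (subst linext_linext) (auto intro!: linext_cong)
  finally show ?thesis .
qed

lemma phi_ccounit:
  assumes f: "f \<in> fspace (SC {})"
  shows "ccounit (Sq qconn qconn_act) (phi {} f) = ccounit (lin_dual kSC) f"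
proof -
  have "phi {} f {} = (\<Sum>\<Gamma>\<in>{{{}}}. f \<Gamma> * delta (decomp {} \<Gamma>) {})"
    unfolding phi_def using f by (intro linext_eq_sum) (auto simp: fspace_iff SC_empty)
  then show ?thesis by (simp add: ccounit_Sq ccounit_dual_kSC decomp_def components_def delta_def)
qed

theorem phi_comonoid_morph: "comonoid_morph (lin_dual kSC) (Sq qconn qconn_act) phi"
  by (simp add: comonoid_morph_def phi_comult phi_ccounit)

definition psi :: "'a set \<Rightarrow> ('a set set \<Rightarrow> 'k::comm_ring_1) \<Rightarrow> ('a set \<times> nat) set \<Rightarrow> 'k" where
  "psi I f = phi I (theta I f)"

theorem psi_species_iso: "species_iso kSC (Sq qconn qconn_act) psi"
proof -
  have "species_iso (lin_dual kSC) (Sq qconn qconn_act) phi"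
    using phi_species_iso by (simp add: species_iso_def)
  then show ?thesis
    using species_iso_comp[OF theta_species_iso] by (simp add: psi_def[abs_def])
qed

theorem psi_comonoid_morph: "comonoid_morph kSC (Sq qconn qconn_act) psi"
  unfolding psi_def[abs_def] phi_def theta_def
  using theta_comonoid_morph[unfolded theta_def[abs_def]] phi_comonoid_morph[unfolded phi_def[abs_def]]
  by (rule comonoid_morph_comp) (auto simp: pairing_in_fspace comult_kSC_in_fspace)

theorem mainTheorem17:
  shows "(\<exists>q qact \<phi>. set_species q qact \<and> q {} = {}
            \<and> species_iso (kSC :: ('a, 'a set set, 'k::field_char_0) lspecies) (Sq q qact) \<phi>
            \<and> monoid_morph (kSC :: ('a, 'a set set, 'k) lspecies) (Sq q qact) \<phi>)
       \<and> (\<exists>q qact \<psi>. set_species q qact \<and> q {} = {}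
            \<and> species_iso (kSC :: ('a, 'a set set, 'k) lspecies) (Sq q qact) \<psi>
            \<and> comonoid_morph (kSC :: ('a, 'a set set, 'k) lspecies) (Sq q qact) \<psi>)
       \<and> (\<exists>\<theta>. species_iso (kSC :: ('a, 'a set set, 'k) lspecies) (lin_dual kSC) \<theta>
            \<and> monoid_morph (kSC :: ('a, 'a set set, 'k) lspecies) (lin_dual kSC) \<theta>
            \<and> comonoid_morph (kSC :: ('a, 'a set set, 'k) lspecies) (lin_dual kSC) \<theta>)"
  using set_species_qconn qconn_empty phi_species_iso phi_monoid_morph psi_species_iso psi_comonoid_morph
    theta_species_iso theta_monoid_morph theta_comonoid_morph
  by blast

end
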